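(* Let ${}_{\mathfrak Y}\mathfrak B_{\mathfrak X}$ and ${}_{\mathfrak X}\mathfrak C_{\mathfrak W}$ be left-fibrant (respectively left-free, left-principal) graphs of bisets. Then $\mathfrak B\otimes_{\mathfrak X}\mathfrak C$ is a left-fibrant (respectively left-free, left-principal) graph of bisets.
   Context: A graph is a set $V\sqcup E$ with maps $x\mapsto x^-\in V$, $x\mapsto\bar x$, $\bar{\bar x}=x$, $x=x^-\iff x=\bar x\iff x\in V$; $x^+=(\bar x)^-$. Graph morphisms commute with these (may send edges to vertices); simplicial ones send edges to edges. A graph of groups attaches to each $x$ a group $G_x$ and homomorphisms $G_x\to G_{x^-}$, $G_x\to G_{\bar x}$ ($G_x\to G_{\bar x}\to G_x$ identity, both identity for vertices). A $\mathfrak Y$-$\mathfrak X$ graph of bisets: a graph $\mathfrak B$, graph morphisms $\lambda\colon\mathfrak B\to\mathfrak Y$, $\rho\colon\mathfrak B\to\mathfrak X$, $G_{\lambda(z)}$-$G_{\rho(z)}$-bisets $B_z$, and congruences $b\mapsto b^-\colon B_z\to B_{z^-}$, $b\mapsto\bar b\colon B_z\to B_{\bar z}$ w.r.t. the corresponding group homomorphisms, satisfying the same axioms. Product: $\mathfrak B\otimes_{\mathfrak X}\mathfrak C$ has underlying graph $\{(b,c)\mid\rho(b)=\lambda(c)\}$, $(b,c)^-=(b^-,c^-)$, $\overline{(b,c)}=(\bar b,\bar c)$, $\lambda(b,c)=\lambda(b)$, $\rho(b,c)=\rho(c)$, biset $B_b\otimes_{G_{\rho(b)}}C_c$ at $(b,c)$.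 Left-fibrant: $\rho$ simplicial and for every vertex $v$ and edge $f$ of the target with $f^-=\rho(v)$, the map $\bigsqcup_{e\in\rho^{-1}(f),\,e^-=v}G_{\lambda(v)}\otimes_{G_{\lambda(e)}}B_e\to B_v$, $g\otimes b\mapsto gb^-$, is an isomorphism of $G_{\lambda(v)}$-$G_f$-bisets. Left-free: left-fibrant and every $B_z$ free as a left set. Left-principal: left-fibrant, every $B_z$ left-principal (simply transitive left action), and $\rho$ a graph isomorphism. *)

theory Defs
  imports "HOL-Algebra.Group"
begin

text \<open>A graph is a set (carrier) with maps x to x^- (source) and x to bar x (reversal).
  Vertices are the fixed points of the source map.\<close>

record 'a graph =
  gcar :: "'a set"
  gsrc :: "'a \<Rightarrow> 'a"
  grev :: "'a \<Rightarrow> 'a"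

definition gverts :: "('a, 'z) graph_scheme \<Rightarrow> 'a set" where
  "gverts \<Gamma> = {x \<in> gcar \<Gamma>. gsrc \<Gamma> x = x}"

definition gedges :: "('a, 'z) graph_scheme \<Rightarrow> 'a set" where
  "gedges \<Gamma> = gcar \<Gamma> - gverts \<Gamma>"

definition is_graph :: "('a, 'z) graph_scheme \<Rightarrow> bool" where
  "is_graph \<Gamma> \<longleftrightarrow> (\<forall>x\<in>gcar \<Gamma>.
      gsrc \<Gamma> x \<in> gcar \<Gamma> \<and> grev \<Gamma> x \<in> gcar \<Gamma> \<and>
      gsrc \<Gamma> (gsrc \<Gamma> x) = gsrc \<Gamma> x \<and>
      grev \<Gamma> (grev \<Gamma> x) = x \<and>
      (x = gsrc \<Gamma> x \<longleftrightarrow> x = grev \<Gamma> x))"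

definition graph_mor :: "('a, 'z1) graph_scheme \<Rightarrow> ('b, 'z2) graph_scheme \<Rightarrow> ('a \<Rightarrow> 'b) \<Rightarrow> bool" where
  "graph_mor \<Gamma> \<Delta> f \<longleftrightarrow> (\<forall>x\<in>gcar \<Gamma>. f x \<in> gcar \<Delta> \<and>
      f (gsrc \<Gamma> x) = gsrc \<Delta> (f x) \<and> f (grev \<Gamma> x) = grev \<Delta> (f x))"

definition simplicial_mor :: "('a, 'z1) graph_scheme \<Rightarrow> ('b, 'z2) graph_scheme \<Rightarrow> ('a \<Rightarrow> 'b) \<Rightarrow> bool" where
  "simplicial_mor \<Gamma> \<Delta> f \<longleftrightarrow> graph_mor \<Gamma> \<Delta> f \<and> f ` gedges \<Gamma> \<subseteq> gedges \<Delta>"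

definition graph_iso :: "('a, 'z1) graph_scheme \<Rightarrow> ('b, 'z2) graph_scheme \<Rightarrow> ('a \<Rightarrow> 'b) \<Rightarrow> bool" where
  "graph_iso \<Gamma> \<Delta> f \<longleftrightarrow> graph_mor \<Gamma> \<Delta> f \<and> bij_betw f (gcar \<Gamma>) (gcar \<Delta>)"

text \<open>All groups G_x share a common element type; ghs x : G_x to G_{x^-},
  ghr x : G_x to G_{bar x}.\<close>

record ('a, 'g) gog = "'a graph" +
  grp :: "'a \<Rightarrow> 'g monoid"
  ghs :: "'a \<Rightarrow> 'g \<Rightarrow> 'g"
  ghr :: "'a \<Rightarrow> 'g \<Rightarrow> 'g"

definition is_gog :: "('a, 'g, 'z) gog_scheme \<Rightarrow> bool" where
  "is_gog X \<longleftrightarrow> is_graph X \<and> (\<forall>x\<in>gcar X.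
      group (grp X x) \<and>
      ghs X x \<in> hom (grp X x) (grp X (gsrc X x)) \<and>
      ghr X x \<in> hom (grp X x) (grp X (grev X x)) \<and>
      (\<forall>g\<in>carrier (grp X x). ghr X (grev X x) (ghr X x g) = g) \<and>
      (x \<in> gverts X \<longrightarrow> (\<forall>g\<in>carrier (grp X x). ghs X x g = g \<and> ghr X x g = g)))"

definition is_biset :: "'g monoid \<Rightarrow> 'h monoid \<Rightarrow> 'e set \<Rightarrow> ('g \<Rightarrow> 'e \<Rightarrow> 'e) \<Rightarrow> ('e \<Rightarrow> 'h \<Rightarrow> 'e) \<Rightarrow> bool" where
  "is_biset G H B l r \<longleftrightarrow>
     (\<forall>g\<in>carrier G. \<forall>x\<in>B. l g x \<in> B) \<and>
     (\<forall>h\<in>carrier H. \<forall>x\<in>B. r x h \<in> B) \<and>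
     (\<forall>x\<in>B. l \<one>\<^bsub>G\<^esub> x = x \<and> r x \<one>\<^bsub>H\<^esub> = x) \<and>
     (\<forall>g\<in>carrier G. \<forall>g'\<in>carrier G. \<forall>x\<in>B. l (g \<otimes>\<^bsub>G\<^esub> g') x = l g (l g' x)) \<and>
     (\<forall>h\<in>carrier H. \<forall>h'\<in>carrier H. \<forall>x\<in>B. r x (h \<otimes>\<^bsub>H\<^esub> h') = r (r x h) h') \<and>
     (\<forall>g\<in>carrier G. \<forall>h\<in>carrier H. \<forall>x\<in>B. l g (r x h) = r (l g x) h)"

definition is_congr :: "'g monoid \<Rightarrow> 'h monoid \<Rightarrow> ('g \<Rightarrow> 'g) \<Rightarrow> ('h \<Rightarrow> 'h) \<Rightarrow>
    'e set \<Rightarrow> ('g \<Rightarrow> 'e \<Rightarrow> 'e) \<Rightarrow> ('e \<Rightarrow> 'h \<Rightarrow> 'e) \<Rightarrow>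
    'e set \<Rightarrow> ('g \<Rightarrow> 'e \<Rightarrow> 'e) \<Rightarrow> ('e \<Rightarrow> 'h \<Rightarrow> 'e) \<Rightarrow> ('e \<Rightarrow> 'e) \<Rightarrow> bool" where
  "is_congr G H \<phi> \<psi> B l r B' l' r' f \<longleftrightarrow>
     (\<forall>x\<in>B. f x \<in> B') \<and>
     (\<forall>g\<in>carrier G. \<forall>x\<in>B. f (l g x) = l' (\<phi> g) (f x)) \<and>
     (\<forall>h\<in>carrier H. \<forall>x\<in>B. f (r x h) = r' (f x) (\<psi> h))"

record ('b, 'y, 'x, 'g, 'h, 'e) gob = "'b graph" +
  blam :: "'b \<Rightarrow> 'y"
  brho :: "'b \<Rightarrow> 'x"
  bset :: "'b \<Rightarrow> 'e set"
  blact :: "'b \<Rightarrow> 'g \<Rightarrow> 'e \<Rightarrow> 'e"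
  bract :: "'b \<Rightarrow> 'e \<Rightarrow> 'h \<Rightarrow> 'e"
  bsrc :: "'b \<Rightarrow> 'e \<Rightarrow> 'e"
  brev :: "'b \<Rightarrow> 'e \<Rightarrow> 'e"

definition is_gob :: "('y, 'g, 'z1) gog_scheme \<Rightarrow> ('x, 'h, 'z2) gog_scheme \<Rightarrow>
    ('b, 'y, 'x, 'g, 'h, 'e, 'z3) gob_scheme \<Rightarrow> bool" where
  "is_gob Y X B \<longleftrightarrow> is_gog Y \<and> is_gog X \<and> is_graph B \<and>
     graph_mor B Y (blam B) \<and> graph_mor B X (brho B) \<and>
     (\<forall>z\<in>gcar B.
        is_biset (grp Y (blam B z)) (grp X (brho B z)) (bset B z) (blact B z) (bract B z) \<and>
        is_congr (grp Y (blam B z)) (grp X (brho B z)) (ghs Y (blam B z)) (ghs X (brho B z))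
          (bset B z) (blact B z) (bract B z)
          (bset B (gsrc B z)) (blact B (gsrc B z)) (bract B (gsrc B z)) (bsrc B z) \<and>
        is_congr (grp Y (blam B z)) (grp X (brho B z)) (ghr Y (blam B z)) (ghr X (brho B z))
          (bset B z) (blact B z) (bract B z)
          (bset B (grev B z)) (blact B (grev B z)) (bract B (grev B z)) (brev B z) \<and>
        (\<forall>b\<in>bset B z. brev B (grev B z) (brev B z b) = b) \<and>
        (z \<in> gverts B \<longrightarrow> (\<forall>b\<in>bset B z. bsrc B z b = b \<and> brev B z b = b)))"

text \<open>X tensor_H Y is the quotient of X x Y by (x h, y) ~ (x, h y); an element is
  represented by its equivalence class (a set of pairs).\<close>

definition tens_cls :: "'h monoid \<Rightarrow> ('x \<Rightarrow> 'h \<Rightarrow> 'x) \<Rightarrow> ('h \<Rightarrow> 'y \<Rightarrow> 'y) \<Rightarrow> 'x \<Rightarrow> 'y \<Rightarrow> ('x \<times> 'y) set" where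
  "tens_cls H r l x y = {(r x (inv\<^bsub>H\<^esub> h), l h y) | h. h \<in> carrier H}"

definition tens_set :: "'h monoid \<Rightarrow> ('x \<Rightarrow> 'h \<Rightarrow> 'x) \<Rightarrow> ('h \<Rightarrow> 'y \<Rightarrow> 'y) \<Rightarrow> 'x set \<Rightarrow> 'y set \<Rightarrow> ('x \<times> 'y) set set" where
  "tens_set H r l X Y = {tens_cls H r l x y | x y. x \<in> X \<and> y \<in> Y}"

definition tens_ap :: "'h monoid \<Rightarrow> ('x \<Rightarrow> 'h \<Rightarrow> 'x) \<Rightarrow> ('h \<Rightarrow> 'y \<Rightarrow> 'y) \<Rightarrow>
    ('u \<Rightarrow> 'x) \<Rightarrow> ('v \<Rightarrow> 'y) \<Rightarrow> ('u \<times> 'v) set \<Rightarrow> ('x \<times> 'y) set" where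
  "tens_ap H r l f1 f2 t = (case (SOME p. p \<in> t) of (x, y) \<Rightarrow> tens_cls H r l (f1 x) (f2 y))"

definition tensor_gob :: "('x, 'h, 'z1) gog_scheme \<Rightarrow> ('b, 'y, 'x, 'g, 'h, 'e, 'z2) gob_scheme \<Rightarrow>
    ('c, 'x, 'w, 'h, 'k, 'f, 'z3) gob_scheme \<Rightarrow> ('b \<times> 'c, 'y, 'w, 'g, 'k, ('e \<times> 'f) set) gob" where
  "tensor_gob X B C = \<lparr>
     gcar = {(b, c). b \<in> gcar B \<and> c \<in> gcar C \<and> brho B b = blam C c},
     gsrc = (\<lambda>(b, c). (gsrc B b, gsrc C c)),
     grev = (\<lambda>(b, c). (grev B b, grev C c)),
     blam = (\<lambda>(b, c). blam B b),
     brho = (\<lambda>(b, c). brho C c),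
     bset = (\<lambda>(b, c). tens_set (grp X (brho B b)) (bract B b) (blact C c) (bset B b) (bset C c)),
     blact = (\<lambda>(b, c) g t. tens_ap (grp X (brho B b)) (bract B b) (blact C c) (blact B b g) id t),
     bract = (\<lambda>(b, c) t k. tens_ap (grp X (brho B b)) (bract B b) (blact C c) id (\<lambda>y. bract C c y k) t),
     bsrc = (\<lambda>(b, c) t. tens_ap (grp X (brho B (gsrc B b))) (bract B (gsrc B b)) (blact C (gsrc C c))
                (bsrc B b) (bsrc C c) t),
     brev = (\<lambda>(b, c) t. tens_ap (grp X (brho B (grev B b))) (bract B (grev B b)) (blact C (grev C c))
                (brev B b) (brev C c) t) \<rparr>"

text \<open>For a vertex v and an edge e with e^- = v: the right G_{lambda(e)}-action on G_{lambda(v)}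
  via the homomorphism G_{lambda(e)} to G_{lambda(e)^-} = G_{lambda(v)}.\<close>
definition fib_r :: "('y, 'g, 'z1) gog_scheme \<Rightarrow> ('b, 'y, 'x, 'g, 'h, 'e, 'z3) gob_scheme \<Rightarrow> 'b \<Rightarrow> 'b \<Rightarrow> 'g \<Rightarrow> 'g \<Rightarrow> 'g" where
  "fib_r Y B v e = (\<lambda>g h. g \<otimes>\<^bsub>grp Y (blam B v)\<^esub> ghs Y (blam B e) h)"

text \<open>The disjoint union over e in rho^{-1}(f) with e^- = v of G_{lambda(v)} tensor_{G_{lambda(e)}} B_e.\<close>
definition fib_dom :: "('y, 'g, 'z1) gog_scheme \<Rightarrow> ('b, 'y, 'x, 'g, 'h, 'e, 'z3) gob_scheme \<Rightarrow> 'b \<Rightarrow> 'x \<Rightarrow> ('b \<times> ('g \<times> 'e) set) set" where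
  "fib_dom Y B v f = {(e, t). e \<in> gcar B \<and> brho B e = f \<and> gsrc B e = v \<and>
      t \<in> tens_set (grp Y (blam B e)) (fib_r Y B v e) (blact B e) (carrier (grp Y (blam B v))) (bset B e)}"

definition fib_lact :: "('y, 'g, 'z1) gog_scheme \<Rightarrow> ('b, 'y, 'x, 'g, 'h, 'e, 'z3) gob_scheme \<Rightarrow> 'b \<Rightarrow> 'g \<Rightarrow> 'b \<times> ('g \<times> 'e) set \<Rightarrow> 'b \<times> ('g \<times> 'e) set" where
  "fib_lact Y B v g' d = (case d of (e, t) \<Rightarrow>
     (e, tens_ap (grp Y (blam B e)) (fib_r Y B v e) (blact B e) (\<lambda>g. g' \<otimes>\<^bsub>grp Y (blam B v)\<^esub> g) id t))"

definition fib_ract :: "('y, 'g, 'z1) gog_scheme \<Rightarrow> ('b, 'y, 'x, 'g, 'h, 'e, 'z3) gob_scheme \<Rightarrow> 'b \<Rightarrow> 'b \<times> ('g \<times> 'e) set \<Rightarrow> 'h \<Rightarrow> 'b \<times> ('g \<times> 'e) set" where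
  "fib_ract Y B v d k = (case d of (e, t) \<Rightarrow>
     (e, tens_ap (grp Y (blam B e)) (fib_r Y B v e) (blact B e) id (\<lambda>b. bract B e b k) t))"

definition fib_map :: "('b, 'y, 'x, 'g, 'h, 'e, 'z3) gob_scheme \<Rightarrow> 'b \<Rightarrow> 'b \<times> ('g \<times> 'e) set \<Rightarrow> 'e" where
  "fib_map B v d = (case d of (e, t) \<Rightarrow>
     (case (SOME p. p \<in> t) of (g, b) \<Rightarrow> blact B v g (bsrc B e b)))"

definition left_fibrant :: "('y, 'g, 'z1) gog_scheme \<Rightarrow> ('x, 'h, 'z2) gog_scheme \<Rightarrow>
    ('b, 'y, 'x, 'g, 'h, 'e, 'z3) gob_scheme \<Rightarrow> bool" where
  "left_fibrant Y X B \<longleftrightarrow> is_gob Y X B \<and> simplicial_mor B X (brho B) \<and>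
     (\<forall>v\<in>gverts B. \<forall>f\<in>gedges X. gsrc X f = brho B v \<longrightarrow>
        bij_betw (fib_map B v) (fib_dom Y B v f) (bset B v) \<and>
        (\<forall>g\<in>carrier (grp Y (blam B v)). \<forall>d\<in>fib_dom Y B v f.
            fib_map B v (fib_lact Y B v g d) = blact B v g (fib_map B v d)) \<and>
        (\<forall>k\<in>carrier (grp X f). \<forall>d\<in>fib_dom Y B v f.
            fib_map B v (fib_ract Y B v d k) = bract B v (fib_map B v d) (ghs X f k)))"

definition left_free :: "('y, 'g, 'z1) gog_scheme \<Rightarrow> ('x, 'h, 'z2) gog_scheme \<Rightarrow>
    ('b, 'y, 'x, 'g, 'h, 'e, 'z3) gob_scheme \<Rightarrow> bool" where
  "left_free Y X B \<longleftrightarrow> left_fibrant Y X B \<and>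
     (\<forall>z\<in>gcar B. \<forall>g\<in>carrier (grp Y (blam B z)). \<forall>x\<in>bset B z.
        blact B z g x = x \<longrightarrow> g = \<one>\<^bsub>grp Y (blam B z)\<^esub>)"

definition left_principal :: "('y, 'g, 'z1) gog_scheme \<Rightarrow> ('x, 'h, 'z2) gog_scheme \<Rightarrow>
    ('b, 'y, 'x, 'g, 'h, 'e, 'z3) gob_scheme \<Rightarrow> bool" where
  "left_principal Y X B \<longleftrightarrow> left_fibrant Y X B \<and> graph_iso B X (brho B) \<and>
     (\<forall>z\<in>gcar B. bset B z \<noteq> {} \<and>
        (\<forall>x\<in>bset B z. \<forall>y\<in>bset B z. \<exists>!g. g \<in> carrier (grp Y (blam B z)) \<and> blact B z g x = y))"

end

theory Submission
  imports Defs
begin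

text \<open>At a vertex (b, c) of the product and an edge f of W, an element x \<otimes> y is decomposed in two
  stages: left-fibrancy of C at c writes y = h \<cdot> c'^-(y') for an element c' over f, and, after
  moving h across the tensor sign, left-fibrancy of B at b over the X-edge \<lambda>(c') (or trivially, if
  \<lambda>(c') is a vertex) writes x h = g \<cdot> b'^-(x'). Then x \<otimes> y is the image of g \<otimes> (x' \<otimes> y') at
  the edge (b', c'). Running the two uniqueness statements in the same order, with the balancing
  relation x k \<otimes> y = x \<otimes> k y in between, shows that this decomposition is unique. Freeness and
  principality are properties of the individual bisets and pass directly to balanced products.\<close>

section \<open>Balanced products of bisets\<close>

definition right_action :: "'h monoid \<Rightarrow> 'x set \<Rightarrow> ('x \<Rightarrow> 'h \<Rightarrow> 'x) \<Rightarrow> bool" where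
  "right_action H X r \<longleftrightarrow> (\<forall>x\<in>X. \<forall>h\<in>carrier H. r x h \<in> X) \<and> (\<forall>x\<in>X. r x \<one>\<^bsub>H\<^esub> = x) \<and>
     (\<forall>x\<in>X. \<forall>h\<in>carrier H. \<forall>h'\<in>carrier H. r x (h \<otimes>\<^bsub>H\<^esub> h') = r (r x h) h')"

definition left_action :: "'h monoid \<Rightarrow> 'y set \<Rightarrow> ('h \<Rightarrow> 'y \<Rightarrow> 'y) \<Rightarrow> bool" where
  "left_action H Y l \<longleftrightarrow> (\<forall>y\<in>Y. \<forall>h\<in>carrier H. l h y \<in> Y) \<and> (\<forall>y\<in>Y. l \<one>\<^bsub>H\<^esub> y = y) \<and>
     (\<forall>y\<in>Y. \<forall>h\<in>carrier H. \<forall>h'\<in>carrier H. l (h \<otimes>\<^bsub>H\<^esub> h') y = l h (l h' y))"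

lemma right_actionD:
  assumes "right_action H X r"
  shows "\<And>x h. x \<in> X \<Longrightarrow> h \<in> carrier H \<Longrightarrow> r x h \<in> X"
    and "\<And>x. x \<in> X \<Longrightarrow> r x \<one>\<^bsub>H\<^esub> = x"
    and "\<And>x h h'. x \<in> X \<Longrightarrow> h \<in> carrier H \<Longrightarrow> h' \<in> carrier H \<Longrightarrow> r x (h \<otimes>\<^bsub>H\<^esub> h') = r (r x h) h'"
  using assms unfolding right_action_def by blast+

lemma left_actionD:
  assumes "left_action H Y l"
  shows "\<And>y h. y \<in> Y \<Longrightarrow> h \<in> carrier H \<Longrightarrow> l h y \<in> Y"
    and "\<And>y. y \<in> Y \<Longrightarrow> l \<one>\<^bsub>H\<^esub> y = y"
    and "\<And>y h h'. y \<in> Y \<Longrightarrow> h \<in> carrier H \<Longrightarrow> h' \<in> carrier H \<Longrightarrow> l (h \<otimes>\<^bsub>H\<^esub> h') y = l h (l h' y)"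
  using assms unfolding left_action_def by blast+

lemma is_bisetD:
  assumes "is_biset G H B l r"
  shows "\<And>g x. g \<in> carrier G \<Longrightarrow> x \<in> B \<Longrightarrow> l g x \<in> B"
    and "\<And>h x. h \<in> carrier H \<Longrightarrow> x \<in> B \<Longrightarrow> r x h \<in> B"
    and "\<And>x. x \<in> B \<Longrightarrow> l \<one>\<^bsub>G\<^esub> x = x"
    and "\<And>x. x \<in> B \<Longrightarrow> r x \<one>\<^bsub>H\<^esub> = x"
    and "\<And>g g' x. g \<in> carrier G \<Longrightarrow> g' \<in> carrier G \<Longrightarrow> x \<in> B \<Longrightarrow> l (g \<otimes>\<^bsub>G\<^esub> g') x = l g (l g' x)"
    and "\<And>h h' x. h \<in> carrier H \<Longrightarrow> h' \<in> carrier H \<Longrightarrow> x \<in> B \<Longrightarrow> r x (h \<otimes>\<^bsub>H\<^esub> h') = r (r x h) h'"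
    and "\<And>g h x. g \<in> carrier G \<Longrightarrow> h \<in> carrier H \<Longrightarrow> x \<in> B \<Longrightarrow> l g (r x h) = r (l g x) h"
  using assms unfolding is_biset_def by blast+

lemma is_biset_left_action: "is_biset G H X l r \<Longrightarrow> left_action G X l"
  unfolding is_biset_def left_action_def by blast

lemma is_biset_right_action: "is_biset G H X l r \<Longrightarrow> right_action H X r"
  unfolding is_biset_def right_action_def by blast

lemma is_congrD:
  assumes "is_congr G H \<phi> \<psi> B l r B' l' r' f"
  shows "\<And>x. x \<in> B \<Longrightarrow> f x \<in> B'"
    and "\<And>g x. g \<in> carrier G \<Longrightarrow> x \<in> B \<Longrightarrow> f (l g x) = l' (\<phi> g) (f x)"
    and "\<And>h x. h \<in> carrier H \<Longrightarrow> x \<in> B \<Longrightarrow> f (r x h) = r' (f x) (\<psi> h)"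
  using assms unfolding is_congr_def by blast+

lemma tens_setE:
  assumes "t \<in> tens_set H r l X Y"
  obtains x y where "x \<in> X" "y \<in> Y" "t = tens_cls H r l x y"
  using assms unfolding tens_set_def by blast

lemma tens_setI: "x \<in> X \<Longrightarrow> y \<in> Y \<Longrightarrow> tens_cls H r l x y \<in> tens_set H r l X Y"
  unfolding tens_set_def by blast

lemma tens_cls_image: "tens_cls H r l x y = (\<lambda>h. (r x (inv\<^bsub>H\<^esub> h), l h y)) ` carrier H"
  unfolding tens_cls_def by blast

locale tensor_data =
  fixes H :: "'h monoid" and X :: "'x set" and r :: "'x \<Rightarrow> 'h \<Rightarrow> 'x"
    and Y :: "'y set" and l :: "'h \<Rightarrow> 'y \<Rightarrow> 'y"
  assumes group: "group H" and right: "right_action H X r" and left: "left_action H Y l"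
begin

sublocale H: group H by (rule group)

lemma tens_cls_refl:
  assumes "x \<in> X" "y \<in> Y"
  shows "(x, y) \<in> tens_cls H r l x y"
proof -
  have "(x, y) = (r x (inv\<^bsub>H\<^esub> \<one>\<^bsub>H\<^esub>), l \<one>\<^bsub>H\<^esub> y)"
    using right_actionD(2)[OF right] left_actionD(2)[OF left] assms by simp
  then show ?thesis unfolding tens_cls_image by blast
qed

lemma tens_cls_shift:
  assumes x: "x \<in> X" and y: "y \<in> Y" and h: "h \<in> carrier H"
  shows "tens_cls H r l (r x (inv\<^bsub>H\<^esub> h)) (l h y) = tens_cls H r l x y"
proof -
  have "tens_cls H r l (r x (inv\<^bsub>H\<^esub> h)) (l h y)
      = (\<lambda>k. (r x (inv\<^bsub>H\<^esub> (k \<otimes>\<^bsub>H\<^esub> h)), l (k \<otimes>\<^bsub>H\<^esub> h) y)) ` carrier H"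
    unfolding tens_cls_image using x y h
    by (intro image_cong refl) (simp add: right_actionD(3)[OF right] left_actionD(3)[OF left] H.inv_mult_group)
  also have "\<dots> = (\<lambda>j. (r x (inv\<^bsub>H\<^esub> j), l j y)) ` ((\<lambda>k. k \<otimes>\<^bsub>H\<^esub> h) ` carrier H)"
    by (simp add: image_image)
  also have "(\<lambda>k. k \<otimes>\<^bsub>H\<^esub> h) ` carrier H = carrier H"
  proof
    show "carrier H \<subseteq> (\<lambda>k. k \<otimes>\<^bsub>H\<^esub> h) ` carrier H"
    proof
      fix j assume j: "j \<in> carrier H"
      then have "j = (j \<otimes>\<^bsub>H\<^esub> inv\<^bsub>H\<^esub> h) \<otimes>\<^bsub>H\<^esub> h" using h by (simp add: H.m_assoc)
      then show "j \<in> (\<lambda>k. k \<otimes>\<^bsub>H\<^esub> h) ` carrier H" using j h by blast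
    qed
  qed (use h in auto)
  finally show ?thesis unfolding tens_cls_image .
qed

lemma tens_cls_move:
  assumes x: "x \<in> X" and y: "y \<in> Y" and h: "h \<in> carrier H"
  shows "tens_cls H r l (r x h) y = tens_cls H r l x (l h y)"
proof -
  have "r (r x h) (inv\<^bsub>H\<^esub> h) = x"
    using x h by (simp flip: right_actionD(3)[OF right] add: right_actionD(2)[OF right])
  then show ?thesis
    using tens_cls_shift[OF right_actionD(1)[OF right x h] y h] by simp
qed

lemma tens_cls_eq_iff:
  assumes "x \<in> X" "y \<in> Y" "x' \<in> X" "y' \<in> Y"
  shows "tens_cls H r l x y = tens_cls H r l x' y' \<longleftrightarrow> (\<exists>h\<in>carrier H. x' = r x (inv\<^bsub>H\<^esub> h) \<and> y' = l h y)"
proof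
  assume "tens_cls H r l x y = tens_cls H r l x' y'"
  then have "(x', y') \<in> tens_cls H r l x y" using tens_cls_refl[OF assms(3,4)] by simp
  then show "\<exists>h\<in>carrier H. x' = r x (inv\<^bsub>H\<^esub> h) \<and> y' = l h y" unfolding tens_cls_def by blast
qed (use tens_cls_shift[OF assms(1,2)] in metis)

end

lemma tens_ap_tens_cls:
  assumes td: "tensor_data H X r Y l" and td': "tensor_data H' X' r' Y' l'" and \<phi>: "\<phi> \<in> hom H H'"
    and x: "x \<in> X" and y: "y \<in> Y"
    and f1: "\<And>x. x \<in> X \<Longrightarrow> f1 x \<in> X'" and f2: "\<And>y. y \<in> Y \<Longrightarrow> f2 y \<in> Y'"
    and f1_r: "\<And>x h. x \<in> X \<Longrightarrow> h \<in> carrier H \<Longrightarrow> f1 (r x h) = r' (f1 x) (\<phi> h)"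
    and f2_l: "\<And>y h. y \<in> Y \<Longrightarrow> h \<in> carrier H \<Longrightarrow> f2 (l h y) = l' (\<phi> h) (f2 y)"
  shows "tens_ap H' r' l' f1 f2 (tens_cls H r l x y) = tens_cls H' r' l' (f1 x) (f2 y)"
proof -
  interpret tensor_data H X r Y l by (rule td)
  interpret T': tensor_data H' X' r' Y' l' by (rule td')
  interpret group_hom H H' \<phi> by unfold_locales (rule \<phi>)
  have "(SOME p. p \<in> tens_cls H r l x y) \<in> tens_cls H r l x y"
    by (rule someI, rule tens_cls_refl[OF x y])
  then obtain h where h: "h \<in> carrier H"
    and p: "(SOME p. p \<in> tens_cls H r l x y) = (r x (inv\<^bsub>H\<^esub> h), l h y)"
    unfolding tens_cls_image by blast
  have "tens_ap H' r' l' f1 f2 (tens_cls H r l x y) = tens_cls H' r' l' (f1 (r x (inv\<^bsub>H\<^esub> h))) (f2 (l h y))"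
    unfolding tens_ap_def p by simp
  also have "\<dots> = tens_cls H' r' l' (r' (f1 x) (inv\<^bsub>H'\<^esub> (\<phi> h))) (l' (\<phi> h) (f2 y))"
    using f1_r[OF x] f2_l[OF y h] h by simp
  also have "\<dots> = tens_cls H' r' l' (f1 x) (f2 y)"
    using T'.tens_cls_shift f1[OF x] f2[OF y] h by simp
  finally show ?thesis .
qed

lemma tens_ap_ident:
  assumes td: "tensor_data H X r Y l" and t: "t \<in> tens_set H r l X Y"
    and f1: "\<And>x. x \<in> X \<Longrightarrow> f1 x = x" and f2: "\<And>y. y \<in> Y \<Longrightarrow> f2 y = y"
  shows "tens_ap H r l f1 f2 t = t"
proof -
  interpret tensor_data H X r Y l by (rule td)
  have hom: "(\<lambda>h. h) \<in> hom H H" by (rule homI) auto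
  from t obtain x y where x: "x \<in> X" and y: "y \<in> Y" and t: "t = tens_cls H r l x y"
    by (rule tens_setE)
  show ?thesis
    unfolding t
    by (subst tens_ap_tens_cls[OF td td hom x y])
       (simp_all add: f1 f2 x y right_actionD(1)[OF right] left_actionD(1)[OF left])
qed

lemma id_in_hom: "id \<in> hom G G"
  using id_iso unfolding iso_def by blast

definition left_free_set :: "'g monoid \<Rightarrow> 'x set \<Rightarrow> ('g \<Rightarrow> 'x \<Rightarrow> 'x) \<Rightarrow> bool" where
  "left_free_set G X l \<longleftrightarrow> (\<forall>g\<in>carrier G. \<forall>x\<in>X. l g x = x \<longrightarrow> g = \<one>\<^bsub>G\<^esub>)"

definition left_principal_set :: "'g monoid \<Rightarrow> 'x set \<Rightarrow> ('g \<Rightarrow> 'x \<Rightarrow> 'x) \<Rightarrow> bool" where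
  "left_principal_set G X l \<longleftrightarrow> X \<noteq> {} \<and> (\<forall>x\<in>X. \<forall>y\<in>X. \<exists>!g. g \<in> carrier G \<and> l g x = y)"

lemma left_principal_set_iff:
  assumes G: "group G" and l: "left_action G X l"
  shows "left_principal_set G X l \<longleftrightarrow>
    X \<noteq> {} \<and> (\<forall>x\<in>X. \<forall>y\<in>X. \<exists>g\<in>carrier G. l g x = y) \<and> left_free_set G X l"
proof -
  interpret group G by (rule G)
  have unique_iff_free: "(\<forall>x\<in>X. \<forall>y\<in>X. \<exists>!g. g \<in> carrier G \<and> l g x = y) \<longleftrightarrow>
      (\<forall>x\<in>X. \<forall>y\<in>X. \<exists>g\<in>carrier G. l g x = y) \<and> left_free_set G X l"
  proof (intro iffI conjI)
    assume "\<forall>x\<in>X. \<forall>y\<in>X. \<exists>!g. g \<in> carrier G \<and> l g x = y"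
    then show "left_free_set G X l"
      unfolding left_free_set_def using left_actionD(2)[OF l] by fastforce
  next
    assume tr: "(\<forall>x\<in>X. \<forall>y\<in>X. \<exists>g\<in>carrier G. l g x = y) \<and> left_free_set G X l"
    show "\<forall>x\<in>X. \<forall>y\<in>X. \<exists>!g. g \<in> carrier G \<and> l g x = y"
    proof (intro ballI ex_ex1I)
      fix x y g g' assume x: "x \<in> X"
        and g: "g \<in> carrier G \<and> l g x = y" and g': "g' \<in> carrier G \<and> l g' x = y"
      then have "l (inv\<^bsub>G\<^esub> g' \<otimes>\<^bsub>G\<^esub> g) x = x"
        using left_actionD(2,3)[OF l] by (metis inv_closed l_inv)
      then have "inv\<^bsub>G\<^esub> g' \<otimes>\<^bsub>G\<^esub> g = \<one>\<^bsub>G\<^esub>"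
        using tr x g g' unfolding left_free_set_def by blast
      then show "g = g'" using g g' by (metis inv_equality inv_inv inv_closed)
    qed (use tr in blast)
  qed blast
  then show ?thesis unfolding left_principal_set_def by blast
qed

locale biset_tensor =
  fixes G :: "'g monoid" and H :: "'h monoid" and K :: "'k monoid"
    and X :: "'x set" and lx :: "'g \<Rightarrow> 'x \<Rightarrow> 'x" and rx :: "'x \<Rightarrow> 'h \<Rightarrow> 'x"
    and Y :: "'y set" and ly :: "'h \<Rightarrow> 'y \<Rightarrow> 'y" and ry :: "'y \<Rightarrow> 'k \<Rightarrow> 'y"
  assumes group_G: "group G" and group_H: "group H" and group_K: "group K"
    and biset_X: "is_biset G H X lx rx" and biset_Y: "is_biset H K Y ly ry"
begin

sublocale tensor_data H X rx Y ly
  by (rule tensor_data.intro[OF group_H is_biset_right_action[OF biset_X] is_biset_left_action[OF biset_Y]])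

lemma tensor_data: "tensor_data H X rx Y ly"
  by (rule tensor_data_axioms)

abbreviation tens_lact :: "'g \<Rightarrow> ('x \<times> 'y) set \<Rightarrow> ('x \<times> 'y) set" where
  "tens_lact g \<equiv> tens_ap H rx ly (lx g) id"

abbreviation tens_ract :: "('x \<times> 'y) set \<Rightarrow> 'k \<Rightarrow> ('x \<times> 'y) set" where
  "tens_ract t k \<equiv> tens_ap H rx ly id (\<lambda>y. ry y k) t"

lemma tens_lact_cls:
  assumes "g \<in> carrier G" "x \<in> X" "y \<in> Y"
  shows "tens_lact g (tens_cls H rx ly x y) = tens_cls H rx ly (lx g x) y"
  using tens_ap_tens_cls[OF tensor_data tensor_data id_in_hom, of x y "lx g" id]
    assms is_bisetD[OF biset_X] by simp

lemma tens_ract_cls: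
  assumes "k \<in> carrier K" "x \<in> X" "y \<in> Y"
  shows "tens_ract (tens_cls H rx ly x y) k = tens_cls H rx ly x (ry y k)"
  using tens_ap_tens_cls[OF tensor_data tensor_data id_in_hom, of x y id "\<lambda>y. ry y k"]
    assms is_bisetD[OF biset_Y] by simp

lemma tens_biset: "is_biset G K (tens_set H rx ly X Y) tens_lact tens_ract"
proof -
  interpret G: group G by (rule group_G)
  interpret K: group K by (rule group_K)
  note bX = is_bisetD[OF biset_X] and bY = is_bisetD[OF biset_Y]
  show ?thesis
    unfolding is_biset_def
  proof (intro conjI ballI)
    fix t assume "t \<in> tens_set H rx ly X Y"
    then obtain x y where x: "x \<in> X" and y: "y \<in> Y" and t: "t = tens_cls H rx ly x y"
      by (rule tens_setE)
    show "tens_lact \<one>\<^bsub>G\<^esub> t = t" "tens_ract t \<one>\<^bsub>K\<^esub> = t"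
      unfolding t using tens_lact_cls tens_ract_cls bX bY x y by simp_all
    fix g g' assume "g \<in> carrier G" "g' \<in> carrier G"
    then show "tens_lact g t \<in> tens_set H rx ly X Y"
      and "tens_lact (g \<otimes>\<^bsub>G\<^esub> g') t = tens_lact g (tens_lact g' t)"
      unfolding t using tens_lact_cls bX x y by (simp_all add: tens_setI)
  next
    fix t k k' assume "t \<in> tens_set H rx ly X Y" "k \<in> carrier K" "k' \<in> carrier K"
    then obtain x y where "x \<in> X" "y \<in> Y" "t = tens_cls H rx ly x y"
      by (auto elim: tens_setE)
    then show "tens_ract t k \<in> tens_set H rx ly X Y"
      and "tens_ract t (k \<otimes>\<^bsub>K\<^esub> k') = tens_ract (tens_ract t k) k'"
      using tens_ract_cls bY \<open>k \<in> carrier K\<close> \<open>k' \<in> carrier K\<close> by (simp_all add: tens_setI)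
  next
    fix g k t assume "g \<in> carrier G" "k \<in> carrier K" "t \<in> tens_set H rx ly X Y"
    then obtain x y where "x \<in> X" "y \<in> Y" "t = tens_cls H rx ly x y"
      by (auto elim: tens_setE)
    then show "tens_lact g (tens_ract t k) = tens_ract (tens_lact g t) k"
      using tens_lact_cls tens_ract_cls bX bY \<open>g \<in> carrier G\<close> \<open>k \<in> carrier K\<close> by simp
  qed
qed

lemma tens_left_free:
  assumes free_X: "left_free_set G X lx" and free_Y: "left_free_set H Y ly"
  shows "left_free_set G (tens_set H rx ly X Y) tens_lact"
  unfolding left_free_set_def
proof (intro ballI impI)
  fix g t assume g: "g \<in> carrier G" and "t \<in> tens_set H rx ly X Y" and fix_t: "tens_lact g t = t"
  then obtain x y where x: "x \<in> X" and y: "y \<in> Y" and t: "t = tens_cls H rx ly x y"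
    by (auto elim: tens_setE)
  have gx: "lx g x \<in> X" using is_bisetD(1)[OF biset_X g x] .
  have "tens_cls H rx ly (lx g x) y = tens_cls H rx ly x y"
    using fix_t tens_lact_cls[OF g x y] t by simp
  then obtain h where h: "h \<in> carrier H"
    and hx: "x = rx (lx g x) (inv\<^bsub>H\<^esub> h)" and hy: "y = ly h y"
    using tens_cls_eq_iff[OF gx y x y] by blast
  have "h = \<one>\<^bsub>H\<^esub>" using free_Y h y hy unfolding left_free_set_def by metis
  then have "lx g x = x" using hx is_bisetD(4)[OF biset_X gx] by simp
  then show "g = \<one>\<^bsub>G\<^esub>" using free_X g x unfolding left_free_set_def by blast
qed

lemma tens_left_principal:
  assumes pr_X: "left_principal_set G X lx" and pr_Y: "left_principal_set H Y ly"
  shows "left_principal_set G (tens_set H rx ly X Y) tens_lact"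
proof -
  note iff = left_principal_set_iff[OF _ is_biset_left_action]
  have X: "X \<noteq> {}" "\<And>x x'. x \<in> X \<Longrightarrow> x' \<in> X \<Longrightarrow> \<exists>g\<in>carrier G. lx g x = x'"
    and free_X: "left_free_set G X lx"
    using pr_X iff[OF group_G biset_X] by blast+
  have Y: "Y \<noteq> {}" "\<And>y y'. y \<in> Y \<Longrightarrow> y' \<in> Y \<Longrightarrow> \<exists>h\<in>carrier H. ly h y = y'"
    and free_Y: "left_free_set H Y ly"
    using pr_Y iff[OF group_H biset_Y] by blast+
  have "\<exists>g\<in>carrier G. tens_lact g t = t'"
    if t: "t \<in> tens_set H rx ly X Y" and t': "t' \<in> tens_set H rx ly X Y" for t t'
  proof -
    obtain x y where x: "x \<in> X" and y: "y \<in> Y" and t: "t = tens_cls H rx ly x y"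
      using t by (rule tens_setE)
    obtain x' y' where x': "x' \<in> X" and y': "y' \<in> Y" and t': "t' = tens_cls H rx ly x' y'"
      using t' by (rule tens_setE)
    obtain h where h: "h \<in> carrier H" and hy: "ly h y = y'" using Y(2)[OF y y'] by blast
    obtain g where g: "g \<in> carrier G" and gx: "lx g x = rx x' h"
      using X(2)[OF x is_bisetD(2)[OF biset_X h x']] by blast
    have "tens_lact g t = t'"
      unfolding t t' tens_lact_cls[OF g x y] gx hy[symmetric] using tens_cls_move[OF x' y h] .
    with g show ?thesis by blast
  qed
  moreover have "tens_set H rx ly X Y \<noteq> {}" using X(1) Y(1) by (auto dest: tens_setI)
  ultimately show ?thesis
    using iff[OF group_G tens_biset] tens_left_free[OF free_X free_Y] by blast
qed

end

lemma tens_congr: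
  assumes T: "biset_tensor G H K X lx rx Y ly ry"
    and T': "biset_tensor G' H' K' X' lx' rx' Y' ly' ry'"
    and \<phi>: "\<phi> \<in> hom G G'" and \<psi>: "\<psi> \<in> hom H H'" and \<chi>: "\<chi> \<in> hom K K'"
    and f1: "is_congr G H \<phi> \<psi> X lx rx X' lx' rx' f1"
    and f2: "is_congr H K \<psi> \<chi> Y ly ry Y' ly' ry' f2"
  shows "is_congr G K \<phi> \<chi>
     (tens_set H rx ly X Y) (biset_tensor.tens_lact H lx rx ly) (biset_tensor.tens_ract H rx ly ry)
     (tens_set H' rx' ly' X' Y') (biset_tensor.tens_lact H' lx' rx' ly')
     (biset_tensor.tens_ract H' rx' ly' ry')
     (tens_ap H' rx' ly' f1 f2)"
proof -
  interpret T: biset_tensor G H K X lx rx Y ly ry by (rule T)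
  interpret T': biset_tensor G' H' K' X' lx' rx' Y' ly' ry' by (rule T')
  note c1 = is_congrD[OF f1] and c2 = is_congrD[OF f2]
  have ap: "tens_ap H' rx' ly' f1 f2 (tens_cls H rx ly x y) = tens_cls H' rx' ly' (f1 x) (f2 y)"
    if "x \<in> X" "y \<in> Y" for x y
    by (rule tens_ap_tens_cls[OF T.tensor_data T'.tensor_data \<psi> that])
       (simp_all add: c1 c2)
  show ?thesis
    unfolding is_congr_def
  proof (intro conjI ballI)
    fix t assume "t \<in> tens_set H rx ly X Y"
    then obtain x y where x: "x \<in> X" and y: "y \<in> Y" and t: "t = tens_cls H rx ly x y"
      by (rule tens_setE)
    show "tens_ap H' rx' ly' f1 f2 t \<in> tens_set H' rx' ly' X' Y'"
      unfolding t ap[OF x y] using c1(1)[OF x] c2(1)[OF y] by (rule tens_setI)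
    fix g assume g: "g \<in> carrier G"
    show "tens_ap H' rx' ly' f1 f2 (T.tens_lact g t) = T'.tens_lact (\<phi> g) (tens_ap H' rx' ly' f1 f2 t)"
      unfolding t T.tens_lact_cls[OF g x y] ap[OF x y] ap[OF is_bisetD(1)[OF T.biset_X g x] y]
      using T'.tens_lact_cls[OF hom_in_carrier[OF \<phi> g] c1(1)[OF x] c2(1)[OF y]] c1(2)[OF g x]
      by simp
  next
    fix k t assume k: "k \<in> carrier K" and "t \<in> tens_set H rx ly X Y"
    then obtain x y where x: "x \<in> X" and y: "y \<in> Y" and t: "t = tens_cls H rx ly x y"
      by (auto elim: tens_setE)
    show "tens_ap H' rx' ly' f1 f2 (T.tens_ract t k) = T'.tens_ract (tens_ap H' rx' ly' f1 f2 t) (\<chi> k)"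
      unfolding t T.tens_ract_cls[OF k x y] ap[OF x y] ap[OF x is_bisetD(2)[OF T.biset_Y k y]]
      using T'.tens_ract_cls[OF hom_in_carrier[OF \<chi> k] c1(1)[OF x] c2(1)[OF y]] c2(3)[OF k y]
      by simp
  qed
qed

section \<open>Fibres of graphs of bisets\<close>

lemma gverts_iff: "x \<in> gverts G \<longleftrightarrow> x \<in> gcar G \<and> gsrc G x = x"
  unfolding gverts_def by blast

lemma gedges_iff: "x \<in> gedges G \<longleftrightarrow> x \<in> gcar G \<and> x \<notin> gverts G"
  unfolding gedges_def by blast

lemma is_graphD:
  assumes "is_graph G" "x \<in> gcar G"
  shows "gsrc G x \<in> gcar G" "grev G x \<in> gcar G" "gsrc G (gsrc G x) = gsrc G x"
    "grev G (grev G x) = x" "x = gsrc G x \<longleftrightarrow> x = grev G x"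
  using assms unfolding is_graph_def by blast+

lemma graph_morD:
  assumes "graph_mor G H f" "x \<in> gcar G"
  shows "f x \<in> gcar H" "f (gsrc G x) = gsrc H (f x)" "f (grev G x) = grev H (f x)"
  using assms unfolding graph_mor_def by blast+

lemma graph_mor_gverts:
  assumes "graph_mor G H f" "x \<in> gverts G"
  shows "f x \<in> gverts H"
proof -
  have "x \<in> gcar G" "gsrc G x = x" using assms(2) unfolding gverts_iff by blast+
  then show ?thesis using graph_morD(1,2)[OF assms(1), of x] unfolding gverts_iff by metis
qed

lemma simplicial_mor_gverts:
  assumes "simplicial_mor G H f" "x \<in> gcar G" "f x \<in> gverts H"
  shows "x \<in> gverts G"
proof (rule ccontr)
  assume "x \<notin> gverts G"
  then have "x \<in> gedges G" using assms(2) by (simp add: gedges_iff)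
  then have "f x \<in> gedges H" using assms(1) unfolding simplicial_mor_def by blast
  then show False using assms(3) by (simp add: gedges_iff)
qed

lemma is_gogD:
  assumes "is_gog Y" "y \<in> gcar Y"
  shows "group (grp Y y)" "ghs Y y \<in> hom (grp Y y) (grp Y (gsrc Y y))"
    "ghr Y y \<in> hom (grp Y y) (grp Y (grev Y y))"
    "y \<in> gverts Y \<Longrightarrow> g \<in> carrier (grp Y y) \<Longrightarrow> ghs Y y g = g"
  using assms unfolding is_gog_def by blast+

locale graph_of_bisets =
  fixes Y :: "('y, 'g, 'z1) gog_scheme" and X :: "('x, 'h, 'z2) gog_scheme"
    and B :: "('b, 'y, 'x, 'g, 'h, 'e, 'z3) gob_scheme"
  assumes gob: "is_gob Y X B"
begin

lemma gog_Y: "is_gog Y" and gog_X: "is_gog X" and graph_B: "is_graph B"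
  and mor_lam: "graph_mor B Y (blam B)" and mor_rho: "graph_mor B X (brho B)"
  using gob unfolding is_gob_def by blast+

context
  fixes z assumes z: "z \<in> gcar B"
begin

lemma src_in: "gsrc B z \<in> gcar B" and rev_in: "grev B z \<in> gcar B"
  using is_graphD[OF graph_B z] by simp_all

lemma lam_in: "blam B z \<in> gcar Y" and rho_in: "brho B z \<in> gcar X"
  using graph_morD(1)[OF mor_lam z] graph_morD(1)[OF mor_rho z] .

lemma lam_src: "blam B (gsrc B z) = gsrc Y (blam B z)"
  and lam_rev: "blam B (grev B z) = grev Y (blam B z)"
  and rho_src: "brho B (gsrc B z) = gsrc X (brho B z)"
  and rho_rev: "brho B (grev B z) = grev X (brho B z)"
  using graph_morD(2,3)[OF mor_lam z] graph_morD(2,3)[OF mor_rho z] by simp_all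

lemma group_lam: "group (grp Y (blam B z))" and group_rho: "group (grp X (brho B z))"
  using is_gogD(1)[OF gog_Y lam_in] is_gogD(1)[OF gog_X rho_in] .

lemma hom_lam_src: "ghs Y (blam B z) \<in> hom (grp Y (blam B z)) (grp Y (blam B (gsrc B z)))"
  and hom_lam_rev: "ghr Y (blam B z) \<in> hom (grp Y (blam B z)) (grp Y (blam B (grev B z)))"
  and hom_rho_src: "ghs X (brho B z) \<in> hom (grp X (brho B z)) (grp X (brho B (gsrc B z)))"
  and hom_rho_rev: "ghr X (brho B z) \<in> hom (grp X (brho B z)) (grp X (brho B (grev B z)))"
  using is_gogD(2,3)[OF gog_Y lam_in] is_gogD(2,3)[OF gog_X rho_in]
  by (simp_all add: lam_src lam_rev rho_src rho_rev)

lemma biset: "is_biset (grp Y (blam B z)) (grp X (brho B z)) (bset B z) (blact B z) (bract B z)"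
  and congr_src: "is_congr (grp Y (blam B z)) (grp X (brho B z)) (ghs Y (blam B z)) (ghs X (brho B z))
      (bset B z) (blact B z) (bract B z)
      (bset B (gsrc B z)) (blact B (gsrc B z)) (bract B (gsrc B z)) (bsrc B z)"
  and congr_rev: "is_congr (grp Y (blam B z)) (grp X (brho B z)) (ghr Y (blam B z)) (ghr X (brho B z))
      (bset B z) (blact B z) (bract B z)
      (bset B (grev B z)) (blact B (grev B z)) (bract B (grev B z)) (brev B z)"
  and brev_brev: "\<And>s. s \<in> bset B z \<Longrightarrow> brev B (grev B z) (brev B z s) = s"
  and vertex_ident: "z \<in> gverts B \<Longrightarrow> s \<in> bset B z \<Longrightarrow> bsrc B z s = s \<and> brev B z s = s"
  using gob z unfolding is_gob_def by blast+

end

end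

locale fibre_edge = graph_of_bisets +
  fixes v e
  assumes v: "v \<in> gverts B" and e: "e \<in> gcar B" and src_e: "gsrc B e = v"
begin

lemma v_in: "v \<in> gcar B"
  using v by (simp add: gverts_iff)

lemma hom_e: "ghs Y (blam B e) \<in> hom (grp Y (blam B e)) (grp Y (blam B v))"
  using hom_lam_src[OF e] src_e by simp

sublocale ghs: group_hom "grp Y (blam B e)" "grp Y (blam B v)" "ghs Y (blam B e)"
  using group_lam[OF e] group_lam[OF v_in] hom_e
  by (simp add: group_hom_def group_hom_axioms_def)

sublocale fib: tensor_data "grp Y (blam B e)" "carrier (grp Y (blam B v))" "fib_r Y B v e"
  "bset B e" "blact B e"
proof (rule tensor_data.intro)
  show "right_action (grp Y (blam B e)) (carrier (grp Y (blam B v))) (fib_r Y B v e)"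
    unfolding right_action_def fib_r_def by (simp add: ghs.H.m_assoc)
qed (simp_all add: group_lam[OF e] is_biset_left_action[OF biset[OF e]])

abbreviation fib_cls where
  "fib_cls g s \<equiv> tens_cls (grp Y (blam B e)) (fib_r Y B v e) (blact B e) g s"

lemma fib_map_cls:
  assumes g: "g \<in> carrier (grp Y (blam B v))" and s: "s \<in> bset B e"
  shows "fib_map B v (e, fib_cls g s) = blact B v g (bsrc B e s)"
proof -
  let ?\<phi> = "ghs Y (blam B e)"
  have "(SOME p. p \<in> fib_cls g s) \<in> fib_cls g s"
    by (rule someI, rule fib.tens_cls_refl[OF g s])
  then obtain h where h: "h \<in> carrier (grp Y (blam B e))"
    and p: "(SOME p. p \<in> fib_cls g s) = (fib_r Y B v e g (inv\<^bsub>grp Y (blam B e)\<^esub> h), blact B e h s)"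
    unfolding tens_cls_image by blast
  have s': "bsrc B e s \<in> bset B v" using is_congrD(1)[OF congr_src[OF e] s] src_e by simp
  have "fib_map B v (e, fib_cls g s)
      = blact B v (g \<otimes>\<^bsub>grp Y (blam B v)\<^esub> inv\<^bsub>grp Y (blam B v)\<^esub> ?\<phi> h) (blact B v (?\<phi> h) (bsrc B e s))"
    unfolding fib_map_def prod.case p using is_congrD(2)[OF congr_src[OF e] h s] h src_e
    by (simp add: fib_r_def)
  also have "\<dots> = blact B v g (bsrc B e s)"
    using is_bisetD(5)[OF biset[OF v_in] _ _ s', symmetric] g h by (simp add: ghs.H.m_assoc)
  finally show ?thesis .
qed

lemma fib_lact_cls:
  assumes g: "g \<in> carrier (grp Y (blam B v))" and g': "g' \<in> carrier (grp Y (blam B v))"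
    and s: "s \<in> bset B e"
  shows "fib_lact Y B v g' (e, fib_cls g s) = (e, fib_cls (g' \<otimes>\<^bsub>grp Y (blam B v)\<^esub> g) s)"
  unfolding fib_lact_def
  using tens_ap_tens_cls[OF fib.tensor_data_axioms fib.tensor_data_axioms id_in_hom g s,
      of "\<lambda>g. g' \<otimes>\<^bsub>grp Y (blam B v)\<^esub> g" id]
  by (simp add: g' fib_r_def ghs.H.m_assoc)

lemma fib_ract_cls:
  assumes g: "g \<in> carrier (grp Y (blam B v))" and k: "k \<in> carrier (grp X (brho B e))"
    and s: "s \<in> bset B e"
  shows "fib_ract Y B v (e, fib_cls g s) k = (e, fib_cls g (bract B e s k))"
  unfolding fib_ract_def
  using tens_ap_tens_cls[OF fib.tensor_data_axioms fib.tensor_data_axioms id_in_hom g s,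
      of id "\<lambda>b. bract B e b k"]
  by (simp add: k is_bisetD(2,7)[OF biset[OF e]])

end

lemma fib_domE:
  assumes "d \<in> fib_dom Y B v f"
  obtains e g s where "d = (e, tens_cls (grp Y (blam B e)) (fib_r Y B v e) (blact B e) g s)"
    "e \<in> gcar B" "brho B e = f" "gsrc B e = v" "g \<in> carrier (grp Y (blam B v))" "s \<in> bset B e"
  using assms unfolding fib_dom_def by (auto elim!: tens_setE)

lemma fib_domI:
  assumes "e \<in> gcar B" "brho B e = f" "gsrc B e = v" "g \<in> carrier (grp Y (blam B v))" "s \<in> bset B e"
  shows "(e, tens_cls (grp Y (blam B e)) (fib_r Y B v e) (blact B e) g s) \<in> fib_dom Y B v f"
  using assms unfolding fib_dom_def by (auto intro: tens_setI)

context graph_of_bisets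
begin

lemma lact_bsrc_ract:
  assumes z: "z \<in> gcar B" and g: "g \<in> carrier (grp Y (blam B (gsrc B z)))"
    and j: "j \<in> carrier (grp X (brho B z))" and x: "x \<in> bset B z"
  shows "bract B (gsrc B z) (blact B (gsrc B z) g (bsrc B z x)) (ghs X (brho B z) j)
    = blact B (gsrc B z) g (bsrc B z (bract B z x j))"
  using is_bisetD(7)[OF biset[OF src_in[OF z]] g hom_in_carrier[OF hom_rho_src[OF z] j]
      is_congrD(1)[OF congr_src[OF z] x]] is_congrD(3)[OF congr_src[OF z] j x]
  by simp

lemma fib_map_equivariant:
  assumes v: "v \<in> gverts B" and d: "d \<in> fib_dom Y B v f"
  shows "fib_map B v d \<in> bset B v"
    and "g \<in> carrier (grp Y (blam B v)) \<Longrightarrow> fib_map B v (fib_lact Y B v g d) = blact B v g (fib_map B v d)"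
    and "k \<in> carrier (grp X f) \<Longrightarrow> fib_map B v (fib_ract Y B v d k) = bract B v (fib_map B v d) (ghs X f k)"
proof -
  obtain e g0 s where d: "d = (e, tens_cls (grp Y (blam B e)) (fib_r Y B v e) (blact B e) g0 s)"
    and e_in: "e \<in> gcar B" and e_over: "brho B e = f" and e_src: "gsrc B e = v"
    and g0: "g0 \<in> carrier (grp Y (blam B v))" and s: "s \<in> bset B e"
    using d by (rule fib_domE)
  interpret fibre_edge Y X B v e using gob v e_in e_src by unfold_locales
  note biset_v = is_bisetD[OF biset[OF v_in]]
  have s': "bsrc B e s \<in> bset B v" using is_congrD(1)[OF congr_src[OF e] s] src_e by simp
  show "fib_map B v d \<in> bset B v"
    unfolding d fib_map_cls[OF g0 s] using biset_v(1)[OF g0 s'] .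
  show "fib_map B v (fib_lact Y B v g d) = blact B v g (fib_map B v d)"
    if g: "g \<in> carrier (grp Y (blam B v))"
    unfolding d fib_lact_cls[OF g0 g s] fib_map_cls[OF g0 s] fib_map_cls[OF ghs.H.m_closed[OF g g0] s]
    using biset_v(5)[OF g g0 s'] .
  show "fib_map B v (fib_ract Y B v d k) = bract B v (fib_map B v d) (ghs X f k)"
    if k: "k \<in> carrier (grp X f)"
  proof -
    have k': "k \<in> carrier (grp X (brho B e))" using k e_over by simp
    show ?thesis
      unfolding d fib_ract_cls[OF g0 k' s] fib_map_cls[OF g0 s]
        fib_map_cls[OF g0 is_bisetD(2)[OF biset[OF e] k' s]]
      using lact_bsrc_ract[OF e _ k' s] g0 e_over src_e by simp
  qed
qed

lemma vertex_act_eq: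
  assumes v: "v \<in> gverts B" and g1: "g1 \<in> carrier (grp Y (blam B v))" and g2: "g2 \<in> carrier (grp Y (blam B v))"
    and s1: "s1 \<in> bset B v" and s2: "s2 \<in> bset B v"
    and eq: "blact B v g1 s1 = blact B v g2 s2"
  shows "\<exists>k\<in>carrier (grp Y (blam B v)).
    g2 = g1 \<otimes>\<^bsub>grp Y (blam B v)\<^esub> ghs Y (blam B v) (inv\<^bsub>grp Y (blam B v)\<^esub> k) \<and> s2 = blact B v k s1"
proof -
  have v_in: "v \<in> gcar B" using v by (simp add: gverts_iff)
  interpret G: group "grp Y (blam B v)" by (rule group_lam[OF v_in])
  note biset_v = is_bisetD[OF biset[OF v_in]]
  define k where "k = inv\<^bsub>grp Y (blam B v)\<^esub> g2 \<otimes>\<^bsub>grp Y (blam B v)\<^esub> g1"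
  have k: "k \<in> carrier (grp Y (blam B v))" unfolding k_def using g1 g2 by simp
  have "ghs Y (blam B v) (inv\<^bsub>grp Y (blam B v)\<^esub> k) = inv\<^bsub>grp Y (blam B v)\<^esub> k"
    using is_gogD(4)[OF gog_Y lam_in[OF v_in] graph_mor_gverts[OF mor_lam v]] k by simp
  moreover have "g1 \<otimes>\<^bsub>grp Y (blam B v)\<^esub> inv\<^bsub>grp Y (blam B v)\<^esub> k = g2"
    unfolding k_def using g1 g2 by (simp add: G.inv_mult_group G.m_assoc[symmetric])
  moreover have "blact B v k s1 = s2"
    unfolding k_def using biset_v(3,5) g1 g2 s1 s2 eq by (metis G.inv_closed G.l_inv)
  ultimately show ?thesis using k by metis
qed

end

lemma left_fibrantD:
  assumes "left_fibrant Y X B"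
  shows "is_gob Y X B" "simplicial_mor B X (brho B)"
    "\<And>v f. v \<in> gverts B \<Longrightarrow> f \<in> gedges X \<Longrightarrow> gsrc X f = brho B v \<Longrightarrow>
       bij_betw (fib_map B v) (fib_dom Y B v f) (bset B v)"
  using assms unfolding left_fibrant_def by blast+

text \<open>Left-fibrancy only speaks about edges f. Since \<open>brho B\<close> is simplicial, the only element of
  \<open>B\<close> over a vertex f with source v is v itself, so the next two lemmas also hold for vertices f.\<close>

lemma left_fibrant_fibre_exists:
  assumes lf: "left_fibrant Y X B" and v: "v \<in> gverts B"
    and f: "f \<in> gcar X" and f_src: "gsrc X f = brho B v" and x: "x \<in> bset B v"
  obtains e g s where "e \<in> gcar B" "brho B e = f" "gsrc B e = v" "g \<in> carrier (grp Y (blam B v))"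
    "s \<in> bset B e" "x = blact B v g (bsrc B e s)"
proof -
  interpret graph_of_bisets Y X B using left_fibrantD(1)[OF lf] by unfold_locales
  have v_in: "v \<in> gcar B" and v_src: "gsrc B v = v" using v by (simp_all add: gverts_iff)
  show ?thesis
  proof (cases "f \<in> gverts X")
    case True
    then have "brho B v = f" using f_src by (simp add: gverts_iff)
    moreover have "x = blact B v \<one>\<^bsub>grp Y (blam B v)\<^esub> (bsrc B v x)"
      using vertex_ident[OF v_in v x] is_bisetD(3)[OF biset[OF v_in] x] by simp
    ultimately show ?thesis
      using that[of v "\<one>\<^bsub>grp Y (blam B v)\<^esub>" x] v_in v_src x group.is_monoid[OF group_lam[OF v_in]]
      by (simp add: monoid.one_closed)
  next
    case False
    then have "f \<in> gedges X" using f by (simp add: gedges_iff)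
    then have "x \<in> fib_map B v ` fib_dom Y B v f"
      using left_fibrantD(3)[OF lf v _ f_src] x by (simp add: bij_betw_def)
    then obtain e g s where e_props: "e \<in> gcar B" "brho B e = f" "gsrc B e = v"
      and g: "g \<in> carrier (grp Y (blam B v))" and s: "s \<in> bset B e"
      and x: "x = fib_map B v (e, tens_cls (grp Y (blam B e)) (fib_r Y B v e) (blact B e) g s)"
      by (auto elim!: fib_domE)
    interpret fibre_edge Y X B v e using gob v e_props by unfold_locales simp_all
    show ?thesis using that[OF e_props g s] x fib_map_cls[OF g s] by simp
  qed
qed

lemma left_fibrant_fibre_unique:
  assumes lf: "left_fibrant Y X B" and v: "v \<in> gverts B"
    and f: "f \<in> gcar X" and f_src: "gsrc X f = brho B v"
    and e1: "e1 \<in> gcar B" "brho B e1 = f" "gsrc B e1 = v"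
    and e2: "e2 \<in> gcar B" "brho B e2 = f" "gsrc B e2 = v"
    and g1: "g1 \<in> carrier (grp Y (blam B v))" and g2: "g2 \<in> carrier (grp Y (blam B v))"
    and s1: "s1 \<in> bset B e1" and s2: "s2 \<in> bset B e2"
    and eq: "blact B v g1 (bsrc B e1 s1) = blact B v g2 (bsrc B e2 s2)"
  shows "e2 = e1 \<and> (\<exists>k\<in>carrier (grp Y (blam B e1)).
    g2 = g1 \<otimes>\<^bsub>grp Y (blam B v)\<^esub> ghs Y (blam B e1) (inv\<^bsub>grp Y (blam B e1)\<^esub> k) \<and> s2 = blact B e1 k s1)"
proof (cases "f \<in> gverts X")
  case True
  interpret graph_of_bisets Y X B using left_fibrantD(1)[OF lf] by unfold_locales
  have "e1 \<in> gverts B" "e2 \<in> gverts B"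
    using simplicial_mor_gverts[OF left_fibrantD(2)[OF lf]] e1 e2 True by simp_all
  then have e: "e1 = v" "e2 = v" using e1 e2 by (simp_all add: gverts_iff)
  then have "bsrc B e1 s1 = s1" "bsrc B e2 s2 = s2"
    using vertex_ident[OF _ v] v s1 s2 by (simp_all add: gverts_iff)
  then show ?thesis
    using vertex_act_eq[OF v g1 g2] eq s1 s2 e by simp
next
  case False
  then have "f \<in> gedges X" using f by (simp add: gedges_iff)
  then have inj: "inj_on (fib_map B v) (fib_dom Y B v f)"
    using left_fibrantD(3)[OF lf v _ f_src] by (simp add: bij_betw_def)
  interpret E1: fibre_edge Y X B v e1 using left_fibrantD(1)[OF lf] v e1 by unfold_locales simp_all
  interpret E2: fibre_edge Y X B v e2 using left_fibrantD(1)[OF lf] v e2 by unfold_locales simp_all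
  have "fib_map B v (e1, E1.fib_cls g1 s1) = fib_map B v (e2, E2.fib_cls g2 s2)"
    using E1.fib_map_cls[OF g1 s1] E2.fib_map_cls[OF g2 s2] eq by simp
  then have pair: "(e1, E1.fib_cls g1 s1) = (e2, E2.fib_cls g2 s2)"
    by (rule inj_onD[OF inj _ fib_domI[OF e1 g1 s1] fib_domI[OF e2 g2 s2]])
  then have e: "e2 = e1" by simp
  from pair have "E1.fib_cls g1 s1 = E1.fib_cls g2 s2" unfolding e by simp
  with e show ?thesis
    using E1.fib.tens_cls_eq_iff[OF g1 s1 g2] s2 by (auto simp: fib_r_def E1.ghs.hom_inv)
qed

section \<open>The product of two graphs of bisets\<close>

lemma gcar_tensor_gob:
  "gcar (tensor_gob X B C) = {(b, c). b \<in> gcar B \<and> c \<in> gcar C \<and> brho B b = blam C c}"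
  by (simp add: tensor_gob_def)

lemma tensor_gob_simps [simp]:
  "gsrc (tensor_gob X B C) (b, c) = (gsrc B b, gsrc C c)"
  "grev (tensor_gob X B C) (b, c) = (grev B b, grev C c)"
  "blam (tensor_gob X B C) (b, c) = blam B b"
  "brho (tensor_gob X B C) (b, c) = brho C c"
  "bset (tensor_gob X B C) (b, c) = tens_set (grp X (brho B b)) (bract B b) (blact C c) (bset B b) (bset C c)"
  "blact (tensor_gob X B C) (b, c)
     = biset_tensor.tens_lact (grp X (brho B b)) (blact B b) (bract B b) (blact C c)"
  "bract (tensor_gob X B C) (b, c)
     = biset_tensor.tens_ract (grp X (brho B b)) (bract B b) (blact C c) (bract C c)"
  "bsrc (tensor_gob X B C) (b, c) = tens_ap (grp X (brho B (gsrc B b))) (bract B (gsrc B b)) (blact C (gsrc C c))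
     (bsrc B b) (bsrc C c)"
  "brev (tensor_gob X B C) (b, c) = tens_ap (grp X (brho B (grev B b))) (bract B (grev B b)) (blact C (grev C c))
     (brev B b) (brev C c)"
  by (simp_all add: tensor_gob_def)

locale composable_gobs = B: graph_of_bisets Y X B + C: graph_of_bisets X W C
  for Y :: "('y, 'g, 'z1) gog_scheme" and X :: "('x, 'h, 'z2) gog_scheme"
    and W :: "('w, 'k, 'z3) gog_scheme"
    and B :: "('b, 'y, 'x, 'g, 'h, 'e, 'z4) gob_scheme"
    and C :: "('c, 'x, 'w, 'h, 'k, 'f, 'z5) gob_scheme"
begin

abbreviation T :: "('b \<times> 'c, 'y, 'w, 'g, 'k, ('e \<times> 'f) set) gob" where
  "T \<equiv> tensor_gob X B C"

abbreviation tcls :: "'b \<Rightarrow> 'c \<Rightarrow> 'e \<Rightarrow> 'f \<Rightarrow> ('e \<times> 'f) set" where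
  "tcls b c \<equiv> tens_cls (grp X (brho B b)) (bract B b) (blact C c)"

lemma mem_gcar_T: "(b, c) \<in> gcar T \<longleftrightarrow> b \<in> gcar B \<and> c \<in> gcar C \<and> brho B b = blam C c"
  by (simp add: gcar_tensor_gob)

lemma mem_gverts_T: "(b, c) \<in> gverts T \<longleftrightarrow> (b, c) \<in> gcar T \<and> b \<in> gverts B \<and> c \<in> gverts C"
  by (auto simp: gverts_iff mem_gcar_T)

lemma gsrc_in_T: "(b, c) \<in> gcar T \<Longrightarrow> (gsrc B b, gsrc C c) \<in> gcar T"
  and grev_in_T: "(b, c) \<in> gcar T \<Longrightarrow> (grev B b, grev C c) \<in> gcar T"
  by (simp_all add: mem_gcar_T B.src_in B.rev_in C.src_in C.rev_in B.rho_src B.rho_rev C.lam_src C.lam_rev)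

lemma graph_T: "is_graph T"
  unfolding is_graph_def
proof (intro ballI)
  fix z assume z: "z \<in> gcar T"
  then obtain b c where z_eq: "z = (b, c)" and b: "b \<in> gcar B" and c: "c \<in> gcar C"
    by (auto simp: gcar_tensor_gob)
  show "gsrc T z \<in> gcar T \<and> grev T z \<in> gcar T \<and> gsrc T (gsrc T z) = gsrc T z \<and>
        grev T (grev T z) = z \<and> (z = gsrc T z) = (z = grev T z)"
    using z is_graphD[OF B.graph_B b] is_graphD[OF C.graph_B c]
    unfolding z_eq by (auto simp: gsrc_in_T grev_in_T)
qed

lemma biset_tensor_at:
  assumes "(b, c) \<in> gcar T"
  shows "biset_tensor (grp Y (blam B b)) (grp X (brho B b)) (grp W (brho C c))
    (bset B b) (blact B b) (bract B b) (bset C c) (blact C c) (bract C c)"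
proof -
  have b: "b \<in> gcar B" and c: "c \<in> gcar C" and bc: "blam C c = brho B b"
    using assms by (simp_all add: mem_gcar_T)
  show ?thesis
    unfolding biset_tensor_def
    using B.group_lam[OF b] B.group_rho[OF b] C.group_rho[OF c] B.biset[OF b] C.biset[OF c, unfolded bc]
    by blast
qed

lemma tens_ap_T_cls:
  assumes bc: "(b, c) \<in> gcar T" and x: "x \<in> bset B b" and y: "y \<in> bset C c"
  shows bsrc_T_cls: "bsrc T (b, c) (tcls b c x y) = tcls (gsrc B b) (gsrc C c) (bsrc B b x) (bsrc C c y)"
    and brev_T_cls: "brev T (b, c) (tcls b c x y) = tcls (grev B b) (grev C c) (brev B b x) (brev C c y)"
proof -
  have b: "b \<in> gcar B" and c: "c \<in> gcar C" and bc': "blam C c = brho B b"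
    using bc by (simp_all add: mem_gcar_T)
  note td = biset_tensor.tensor_data[OF biset_tensor_at]
  show "bsrc T (b, c) (tcls b c x y) = tcls (gsrc B b) (gsrc C c) (bsrc B b x) (bsrc C c y)"
    using tens_ap_tens_cls[OF td[OF bc] td[OF gsrc_in_T[OF bc]] B.hom_rho_src[OF b] x y]
      is_congrD[OF B.congr_src[OF b]] is_congrD[OF C.congr_src[OF c, unfolded bc']]
    by simp
  show "brev T (b, c) (tcls b c x y) = tcls (grev B b) (grev C c) (brev B b x) (brev C c y)"
    using tens_ap_tens_cls[OF td[OF bc] td[OF grev_in_T[OF bc]] B.hom_rho_rev[OF b] x y]
      is_congrD[OF B.congr_rev[OF b]] is_congrD[OF C.congr_rev[OF c, unfolded bc']]
    by simp
qed

lemma gob_T: "is_gob Y W T"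
  unfolding is_gob_def
proof (intro conjI ballI impI)
  show "is_gog Y" "is_gog W" by (rule B.gog_Y, rule C.gog_X)
  show "is_graph T" by (rule graph_T)
  show "graph_mor T Y (blam T)" "graph_mor T W (brho T)"
    using B.mor_lam C.mor_rho unfolding graph_mor_def by (auto simp: gcar_tensor_gob)
next
  fix z assume z: "z \<in> gcar T"
  then obtain b c where z_eq: "z = (b, c)" and bc: "(b, c) \<in> gcar T"
    and b: "b \<in> gcar B" and c: "c \<in> gcar C" and bc': "blam C c = brho B b"
    by (auto simp: gcar_tensor_gob)
  note at = biset_tensor_at[OF bc]
  show "is_biset (grp Y (blam T z)) (grp W (brho T z)) (bset T z) (blact T z) (bract T z)"
    unfolding z_eq using biset_tensor.tens_biset[OF at] by simp
  show "is_congr (grp Y (blam T z)) (grp W (brho T z)) (ghs Y (blam T z)) (ghs W (brho T z))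
      (bset T z) (blact T z) (bract T z)
      (bset T (gsrc T z)) (blact T (gsrc T z)) (bract T (gsrc T z)) (bsrc T z)"
    unfolding z_eq
    using tens_congr[OF at biset_tensor_at[OF gsrc_in_T[OF bc]] B.hom_lam_src[OF b]
        B.hom_rho_src[OF b] C.hom_rho_src[OF c] B.congr_src[OF b] C.congr_src[OF c, unfolded bc']]
    by simp
  show "is_congr (grp Y (blam T z)) (grp W (brho T z)) (ghr Y (blam T z)) (ghr W (brho T z))
      (bset T z) (blact T z) (bract T z)
      (bset T (grev T z)) (blact T (grev T z)) (bract T (grev T z)) (brev T z)"
    unfolding z_eq
    using tens_congr[OF at biset_tensor_at[OF grev_in_T[OF bc]] B.hom_lam_rev[OF b]
        B.hom_rho_rev[OF b] C.hom_rho_rev[OF c] B.congr_rev[OF b] C.congr_rev[OF c, unfolded bc']]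
    by simp
  fix t assume "t \<in> bset T z"
  then obtain x y where x: "x \<in> bset B b" and y: "y \<in> bset C c" and t: "t = tcls b c x y"
    unfolding z_eq by (auto elim: tens_setE)
  show "brev T (grev T z) (brev T z t) = t"
    using brev_T_cls[OF bc x y] brev_T_cls[OF grev_in_T[OF bc]
        is_congrD(1)[OF B.congr_rev[OF b] x] is_congrD(1)[OF C.congr_rev[OF c] y]]
      is_graphD(4)[OF B.graph_B b] is_graphD(4)[OF C.graph_B c] B.brev_brev[OF b x] C.brev_brev[OF c y]
    unfolding z_eq t by simp
  assume "z \<in> gverts T"
  then have "b \<in> gverts B" "c \<in> gverts C" and b_src: "gsrc B b = b" "grev B b = b"
    and c_src: "gsrc C c = c" "grev C c = c"
    unfolding z_eq mem_gverts_T
    by (auto simp: gverts_iff dest: is_graphD(5)[OF B.graph_B] is_graphD(5)[OF C.graph_B])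
  then have "\<forall>x\<in>bset B b. bsrc B b x = x \<and> brev B b x = x" "\<forall>y\<in>bset C c. bsrc C c y = y \<and> brev C c y = y"
    using B.vertex_ident[OF b] C.vertex_ident[OF c] by blast+
  then show "bsrc T z t = t" "brev T z t = t"
    using tens_ap_ident[OF biset_tensor.tensor_data[OF at] \<open>t \<in> bset T z\<close>[unfolded z_eq tensor_gob_simps]]
    unfolding z_eq tensor_gob_simps b_src c_src by simp_all
qed

end

context composable_gobs
begin

abbreviation tfib_cls where
  "tfib_cls v e \<equiv> tens_cls (grp Y (blam T e)) (fib_r Y T v e) (blact T e)"

lemma fib_map_T_cls:
  assumes v: "(b, c) \<in> gverts T" and e: "(b', c') \<in> gcar T"
    and b'_src: "gsrc B b' = b" and c'_src: "gsrc C c' = c"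
    and g: "g \<in> carrier (grp Y (blam B b))" and x: "x \<in> bset B b'" and y: "y \<in> bset C c'"
  shows "fib_map T (b, c) ((b', c'), tfib_cls (b, c) (b', c') g (tcls b' c' x y))
       = tcls b c (blact B b g (bsrc B b' x)) (bsrc C c' y)"
proof -
  interpret fibre_edge Y W T "(b, c)" "(b', c')" using gob_T v e b'_src c'_src by unfold_locales simp_all
  have b': "b' \<in> gcar B" and c': "c' \<in> gcar C" using e by (simp_all add: mem_gcar_T)
  have x': "bsrc B b' x \<in> bset B b" using is_congrD(1)[OF B.congr_src[OF b'] x] b'_src by simp
  have y': "bsrc C c' y \<in> bset C c" using is_congrD(1)[OF C.congr_src[OF c'] y] c'_src by simp
  have "fib_map T (b, c) ((b', c'), tfib_cls (b, c) (b', c') g (tcls b' c' x y))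
      = blact T (b, c) g (tcls b c (bsrc B b' x) (bsrc C c' y))"
    using fib_map_cls[of g "tcls b' c' x y"] g x y bsrc_T_cls[OF e x y] b'_src c'_src
    by (simp add: tens_setI)
  also have "\<dots> = tcls b c (blact B b g (bsrc B b' x)) (bsrc C c' y)"
    using biset_tensor.tens_lact_cls[OF biset_tensor_at[OF v_in] g x' y'] by simp
  finally show ?thesis .
qed

lemma fib_map_T_surj:
  assumes lf_B: "left_fibrant Y X B" and lf_C: "left_fibrant X W C"
    and v: "(b, c) \<in> gverts T" and f: "f \<in> gcar W" and f_src: "gsrc W f = brho C c"
    and s: "s \<in> bset T (b, c)"
  shows "s \<in> fib_map T (b, c) ` fib_dom Y T (b, c) f"
proof -
  have b_v: "b \<in> gverts B" and c_v: "c \<in> gverts C" and b: "b \<in> gcar B" and c: "c \<in> gcar C"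
    and bc: "blam C c = brho B b"
    using v by (simp_all add: mem_gverts_T mem_gcar_T)
  interpret tensor_data "grp X (brho B b)" "bset B b" "bract B b" "bset C c" "blact C c"
    using biset_tensor.tensor_data[OF biset_tensor_at] v by (simp add: mem_gverts_T)
  obtain x y where x: "x \<in> bset B b" and y: "y \<in> bset C c" and s: "s = tcls b c x y"
    using s by (auto elim: tens_setE)
  obtain c' h y' where c': "c' \<in> gcar C" "brho C c' = f" "gsrc C c' = c"
    and h: "h \<in> carrier (grp X (brho B b))" and y': "y' \<in> bset C c'"
    and y_eq: "y = blact C c h (bsrc C c' y')"
    using left_fibrant_fibre_exists[OF lf_C c_v f f_src y] unfolding bc by blast
  have "bsrc C c' y' \<in> bset C c" using is_congrD(1)[OF C.congr_src[OF c'(1)] y'] c' by simp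
  then have s_eq: "s = tcls b c (bract B b x h) (bsrc C c' y')"
    unfolding s y_eq using tens_cls_move[OF x _ h] by simp
  have "blam C c' \<in> gcar X" and "gsrc X (blam C c') = brho B b"
    using C.lam_in[OF c'(1)] C.lam_src[OF c'(1)] c' bc by simp_all
  then obtain b' g x' where b': "b' \<in> gcar B" "brho B b' = blam C c'" "gsrc B b' = b"
    and g: "g \<in> carrier (grp Y (blam B b))" and x': "x' \<in> bset B b'"
    and x_eq: "bract B b x h = blact B b g (bsrc B b' x')"
    using left_fibrant_fibre_exists[OF lf_B b_v _ _ is_bisetD(2)[OF B.biset[OF b] h x]] by blast
  have e: "(b', c') \<in> gcar T" using b' c' by (simp add: mem_gcar_T)
  have "((b', c'), tfib_cls (b, c) (b', c') g (tcls b' c' x' y')) \<in> fib_dom Y T (b, c) f"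
    by (rule fib_domI) (use e b' c' g x' y' in \<open>simp_all add: tens_setI\<close>)
  moreover have "fib_map T (b, c) ((b', c'), tfib_cls (b, c) (b', c') g (tcls b' c' x' y')) = s"
    unfolding fib_map_T_cls[OF v e b'(3) c'(3) g x' y'] s_eq x_eq ..
  ultimately show ?thesis by (metis image_eqI)
qed

lemma tfib_cls_shift:
  assumes v: "(b, c) \<in> gverts T" and e: "(b1, c1) \<in> gcar T"
    and b1_src: "gsrc B b1 = b" and c1_src: "gsrc C c1 = c"
    and g: "g \<in> carrier (grp Y (blam B b))" and m: "m \<in> carrier (grp Y (blam B b1))"
    and k: "k \<in> carrier (grp X (brho B b1))" and x: "x \<in> bset B b1" and y: "y \<in> bset C c1"
  shows "tfib_cls (b, c) (b1, c1) (g \<otimes>\<^bsub>grp Y (blam B b)\<^esub> ghs Y (blam B b1) (inv\<^bsub>grp Y (blam B b1)\<^esub> m))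
      (tcls b1 c1 (blact B b1 m (bract B b1 x (inv\<^bsub>grp X (brho B b1)\<^esub> k))) (blact C c1 k y))
    = tfib_cls (b, c) (b1, c1) g (tcls b1 c1 x y)"
proof -
  interpret fibre_edge Y W T "(b, c)" "(b1, c1)"
    using gob_T v e b1_src c1_src by unfold_locales simp_all
  interpret E: biset_tensor "grp Y (blam B b1)" "grp X (brho B b1)" "grp W (brho C c1)"
    "bset B b1" "blact B b1" "bract B b1" "bset C c1" "blact C c1" "bract C c1"
    by (rule biset_tensor_at[OF e])
  have b1: "b1 \<in> gcar B" using e by (simp add: mem_gcar_T)
  have "tcls b1 c1 (blact B b1 m (bract B b1 x (inv\<^bsub>grp X (brho B b1)\<^esub> k))) (blact C c1 k y)
      = blact T (b1, c1) m (tcls b1 c1 x y)"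
    using is_bisetD(7)[OF B.biset[OF b1] m _ x] E.tens_cls_shift[OF is_bisetD(1)[OF B.biset[OF b1] m x] y k]
      E.tens_lact_cls[OF m x y] k by simp
  then show ?thesis
    using fib.tens_cls_shift[of g "tcls b1 c1 x y" m] g m x y
    by (simp add: fib_r_def tens_setI)
qed

lemma fib_dom_TE:
  assumes "d \<in> fib_dom Y T (b, c) f"
  obtains b1 c1 g x y where "d = ((b1, c1), tfib_cls (b, c) (b1, c1) g (tcls b1 c1 x y))"
    "(b1, c1) \<in> gcar T" "brho C c1 = f" "gsrc B b1 = b" "gsrc C c1 = c"
    "g \<in> carrier (grp Y (blam B b))" "x \<in> bset B b1" "y \<in> bset C c1"
proof -
  obtain e g t where d: "d = (e, tfib_cls (b, c) e g t)" and e: "e \<in> gcar T" "brho T e = f" "gsrc T e = (b, c)"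
    and g: "g \<in> carrier (grp Y (blam T (b, c)))" and t: "t \<in> bset T e"
    using assms by (rule fib_domE)
  obtain b1 c1 where e_eq: "e = (b1, c1)" by fastforce
  obtain x y where "x \<in> bset B b1" "y \<in> bset C c1" "t = tcls b1 c1 x y"
    using t unfolding e_eq by (auto elim: tens_setE)
  then show thesis using that d e g unfolding e_eq by simp
qed

lemma fib_map_T_eqD:
  assumes lf_C: "left_fibrant X W C"
    and v: "(b, c) \<in> gverts T" and f: "f \<in> gcar W" and f_src: "gsrc W f = brho C c"
    and e1: "(b1, c1) \<in> gcar T" "brho C c1 = f" "gsrc B b1 = b" "gsrc C c1 = c"
    and e2: "(b2, c2) \<in> gcar T" "brho C c2 = f" "gsrc B b2 = b" "gsrc C c2 = c"
    and g1: "g1 \<in> carrier (grp Y (blam B b))" and g2: "g2 \<in> carrier (grp Y (blam B b))"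
    and x1: "x1 \<in> bset B b1" and y1: "y1 \<in> bset C c1" and x2: "x2 \<in> bset B b2" and y2: "y2 \<in> bset C c2"
    and eq: "tcls b c (blact B b g1 (bsrc B b1 x1)) (bsrc C c1 y1)
      = tcls b c (blact B b g2 (bsrc B b2 x2)) (bsrc C c2 y2)"
  obtains k where "c2 = c1" "k \<in> carrier (grp X (brho B b1))" "y2 = blact C c1 k y1"
    "blact B b g2 (bsrc B b2 x2) = blact B b g1 (bsrc B b1 (bract B b1 x1 (inv\<^bsub>grp X (brho B b1)\<^esub> k)))"
proof -
  have b_v: "b \<in> gverts B" and c_v: "c \<in> gverts C" and b: "b \<in> gcar B" and bc: "blam C c = brho B b"
    using v by (simp_all add: mem_gverts_T mem_gcar_T)
  have b1: "b1 \<in> gcar B" and c1: "c1 \<in> gcar C" and b1c1: "blam C c1 = brho B b1"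
    and b2: "b2 \<in> gcar B" and c2: "c2 \<in> gcar C"
    using e1 e2 by (simp_all add: mem_gcar_T)
  interpret tensor_data "grp X (brho B b)" "bset B b" "bract B b" "bset C c" "blact C c"
    using biset_tensor.tensor_data[OF biset_tensor_at] v by (simp add: mem_gverts_T)
  have sx: "bsrc B b1 x1 \<in> bset B b" "bsrc B b2 x2 \<in> bset B b"
    and sy: "bsrc C c1 y1 \<in> bset C c" "bsrc C c2 y2 \<in> bset C c"
    using is_congrD(1)[OF B.congr_src[OF b1] x1] is_congrD(1)[OF B.congr_src[OF b2] x2]
      is_congrD(1)[OF C.congr_src[OF c1] y1] is_congrD(1)[OF C.congr_src[OF c2] y2] e1 e2 by simp_all
  have gx: "blact B b g1 (bsrc B b1 x1) \<in> bset B b" "blact B b g2 (bsrc B b2 x2) \<in> bset B b"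
    using is_bisetD(1)[OF B.biset[OF b]] g1 g2 sx by simp_all
  obtain h where h: "h \<in> carrier (grp X (brho B b))"
    and hx: "blact B b g2 (bsrc B b2 x2) = bract B b (blact B b g1 (bsrc B b1 x1)) (inv\<^bsub>grp X (brho B b)\<^esub> h)"
    and hy: "bsrc C c2 y2 = blact C c h (bsrc C c1 y1)"
    using eq unfolding tens_cls_eq_iff[OF gx(1) sy(1) gx(2) sy(2)] by blast
  have one: "\<one>\<^bsub>grp X (blam C c)\<^esub> \<in> carrier (grp X (blam C c))"
    using C.group_lam[OF C.src_in[OF c1]] e1 by (simp add: group.is_monoid monoid.one_closed)
  have "blact C c h (bsrc C c1 y1) = blact C c \<one>\<^bsub>grp X (blam C c)\<^esub> (bsrc C c2 y2)"
    using hy is_bisetD(3)[OF C.biset[OF C.src_in[OF c2]]] sy e2 by simp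
  then have "c2 = c1 \<and> (\<exists>k\<in>carrier (grp X (blam C c1)). \<one>\<^bsub>grp X (blam C c)\<^esub>
      = h \<otimes>\<^bsub>grp X (blam C c)\<^esub> ghs X (blam C c1) (inv\<^bsub>grp X (blam C c1)\<^esub> k) \<and> y2 = blact C c1 k y1)"
    using h bc
    by (intro left_fibrant_fibre_unique[OF lf_C c_v f f_src c1 e1(2,4) c2 e2(2,4) _ one y1 y2]) simp_all
  then obtain k where c2_eq: "c2 = c1" and k: "k \<in> carrier (grp X (brho B b1))"
    and hk: "\<one>\<^bsub>grp X (brho B b)\<^esub> = h \<otimes>\<^bsub>grp X (brho B b)\<^esub> ghs X (brho B b1) (inv\<^bsub>grp X (brho B b1)\<^esub> k)"
    and y2_eq: "y2 = blact C c1 k y1"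
    unfolding b1c1 bc by blast
  have ik: "inv\<^bsub>grp X (brho B b1)\<^esub> k \<in> carrier (grp X (brho B b1))"
    using k by (simp add: group.inv_closed[OF B.group_rho[OF b1]])
  have "inv\<^bsub>grp X (brho B b)\<^esub> h = ghs X (brho B b1) (inv\<^bsub>grp X (brho B b1)\<^esub> k)"
    using H.inv_equality[OF H.inv_comm[OF hk[symmetric] h] h] hom_in_carrier[OF B.hom_rho_src[OF b1] ik] e1(3)
    by simp
  then have "blact B b g2 (bsrc B b2 x2)
      = blact B b g1 (bsrc B b1 (bract B b1 x1 (inv\<^bsub>grp X (brho B b1)\<^esub> k)))"
    using hx B.lact_bsrc_ract[OF b1 _ ik x1] g1 e1(3) by simp
  with c2_eq k y2_eq show thesis by (rule that)
qed

lemma fib_map_T_inj: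
  assumes lf_B: "left_fibrant Y X B" and lf_C: "left_fibrant X W C"
    and v: "(b, c) \<in> gverts T" and f: "f \<in> gcar W" and f_src: "gsrc W f = brho C c"
  shows "inj_on (fib_map T (b, c)) (fib_dom Y T (b, c) f)"
proof (rule inj_onI)
  fix d1 d2 assume d1: "d1 \<in> fib_dom Y T (b, c) f" and d2: "d2 \<in> fib_dom Y T (b, c) f"
    and eq: "fib_map T (b, c) d1 = fib_map T (b, c) d2"
  obtain b1 c1 g1 x1 y1 where d1_eq: "d1 = ((b1, c1), tfib_cls (b, c) (b1, c1) g1 (tcls b1 c1 x1 y1))"
    and e1: "(b1, c1) \<in> gcar T" "brho C c1 = f" "gsrc B b1 = b" "gsrc C c1 = c"
    and g1: "g1 \<in> carrier (grp Y (blam B b))" and x1: "x1 \<in> bset B b1" and y1: "y1 \<in> bset C c1"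
    using d1 by (rule fib_dom_TE)
  obtain b2 c2 g2 x2 y2 where d2_eq: "d2 = ((b2, c2), tfib_cls (b, c) (b2, c2) g2 (tcls b2 c2 x2 y2))"
    and e2: "(b2, c2) \<in> gcar T" "brho C c2 = f" "gsrc B b2 = b" "gsrc C c2 = c"
    and g2: "g2 \<in> carrier (grp Y (blam B b))" and x2: "x2 \<in> bset B b2" and y2: "y2 \<in> bset C c2"
    using d2 by (rule fib_dom_TE)
  have b_v: "b \<in> gverts B" and bc: "blam C c = brho B b"
    using v by (simp_all add: mem_gverts_T mem_gcar_T)
  have b1: "b1 \<in> gcar B" and c1: "c1 \<in> gcar C" and b1c1: "brho B b1 = blam C c1"
    and b2: "b2 \<in> gcar B" and b2c2: "brho B b2 = blam C c2"
    using e1 e2 by (simp_all add: mem_gcar_T)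
  obtain k where c2_eq: "c2 = c1" and k: "k \<in> carrier (grp X (brho B b1))"
    and y2_eq: "y2 = blact C c1 k y1"
    and x_eq: "blact B b g2 (bsrc B b2 x2) = blact B b g1 (bsrc B b1 (bract B b1 x1 (inv\<^bsub>grp X (brho B b1)\<^esub> k)))"
    using fib_map_T_eqD[OF lf_C v f f_src e1 e2 g1 g2 x1 y1 x2 y2]
      eq fib_map_T_cls[OF v e1(1,3,4) g1 x1 y1] fib_map_T_cls[OF v e2(1,3,4) g2 x2 y2]
    unfolding d1_eq d2_eq by metis
  have x1': "bract B b1 x1 (inv\<^bsub>grp X (brho B b1)\<^esub> k) \<in> bset B b1"
    using is_bisetD(2)[OF B.biset[OF b1] _ x1] k group.inv_closed[OF B.group_rho[OF b1]] by simp
  have "blam C c1 \<in> gcar X" "gsrc X (blam C c1) = brho B b"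
    using C.lam_in[OF c1] C.lam_src[OF c1] e1(4) bc by simp_all
  then obtain m where b2_eq: "b2 = b1" and m: "m \<in> carrier (grp Y (blam B b1))"
    and g2_eq: "g2 = g1 \<otimes>\<^bsub>grp Y (blam B b)\<^esub> ghs Y (blam B b1) (inv\<^bsub>grp Y (blam B b1)\<^esub> m)"
    and x2_eq: "x2 = blact B b1 m (bract B b1 x1 (inv\<^bsub>grp X (brho B b1)\<^esub> k))"
    using left_fibrant_fibre_unique[OF lf_B b_v _ _ b1 b1c1 e1(3) b2 _ e2(3) g1 g2 x1' x2 x_eq[symmetric]]
      b2c2 c2_eq by blast
  show "d1 = d2"
    unfolding d1_eq d2_eq b2_eq c2_eq g2_eq x2_eq y2_eq
    using tfib_cls_shift[OF v e1(1,3,4) g1 m k x1 y1] by simp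
qed

end

context composable_gobs
begin

lemma simplicial_T:
  assumes simp_B: "simplicial_mor B X (brho B)" and simp_C: "simplicial_mor C W (brho C)"
  shows "simplicial_mor T W (brho T)"
  unfolding simplicial_mor_def
proof (intro conjI subsetI)
  show "graph_mor T W (brho T)"
    using C.mor_rho unfolding graph_mor_def by (auto simp: gcar_tensor_gob)
next
  fix w assume "w \<in> brho T ` gedges T"
  then obtain b c where bc: "(b, c) \<in> gcar T" "(b, c) \<notin> gverts T" and w: "w = brho C c"
    by (auto simp: gedges_iff)
  have b: "b \<in> gcar B" and c: "c \<in> gcar C" and bc': "brho B b = blam C c"
    using bc(1) by (simp_all add: mem_gcar_T)
  show "w \<in> gedges W"
  proof (rule ccontr)
    assume "w \<notin> gedges W"
    then have "c \<in> gverts C"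
      using simplicial_mor_gverts[OF simp_C c] C.rho_in[OF c] w by (simp add: gedges_iff)
    then have "b \<in> gverts B"
      using simplicial_mor_gverts[OF simp_B b] graph_mor_gverts[OF C.mor_lam] bc' by simp
    then show False using bc \<open>c \<in> gverts C\<close> by (simp add: mem_gverts_T)
  qed
qed

lemma graph_iso_T:
  assumes iso_B: "graph_iso B X (brho B)" and iso_C: "graph_iso C W (brho C)"
  shows "graph_iso T W (brho T)"
  unfolding graph_iso_def bij_betw_def
proof (intro conjI)
  show "graph_mor T W (brho T)"
    using C.mor_rho unfolding graph_mor_def by (auto simp: gcar_tensor_gob)
  have inj_B: "inj_on (brho B) (gcar B)" and inj_C: "inj_on (brho C) (gcar C)"
    and img_B: "brho B ` gcar B = gcar X" and img_C: "brho C ` gcar C = gcar W"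
    using iso_B iso_C unfolding graph_iso_def bij_betw_def by blast+
  show "inj_on (brho T) (gcar T)"
  proof (rule inj_onI, clarsimp simp: mem_gcar_T)
    fix b1 c1 b2 c2
    assume "b1 \<in> gcar B" "c1 \<in> gcar C" "brho B b1 = blam C c1"
      and "b2 \<in> gcar B" "c2 \<in> gcar C" "brho B b2 = blam C c2" and "brho C c1 = brho C c2"
    then show "b1 = b2 \<and> c1 = c2" using inj_onD[OF inj_B] inj_onD[OF inj_C] by metis
  qed
  show "brho T ` gcar T = gcar W"
  proof (intro equalityI subsetI)
    fix w assume "w \<in> gcar W"
    then obtain c where c: "c \<in> gcar C" and w: "w = brho C c" using img_C by blast
    then obtain b where "b \<in> gcar B" "brho B b = blam C c" using C.lam_in img_B by (metis imageE)
    with c w show "w \<in> brho T ` gcar T" by (intro image_eqI[of _ _ "(b, c)"]) (simp_all add: mem_gcar_T)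
  qed (use C.rho_in in \<open>auto simp: gcar_tensor_gob\<close>)
qed

end

lemma left_fibrant_composable:
  assumes "left_fibrant Y X B" "left_fibrant X W C"
  shows "composable_gobs Y X W B C"
  using left_fibrantD(1)[OF assms(1)] left_fibrantD(1)[OF assms(2)]
  by (simp add: composable_gobs_def graph_of_bisets_def)

lemma left_fibrant_tensor_gob:
  assumes lf_B: "left_fibrant Y X B" and lf_C: "left_fibrant X W C"
  shows "left_fibrant Y W (tensor_gob X B C)"
proof -
  interpret composable_gobs Y X W B C using left_fibrant_composable[OF assms] .
  interpret T: graph_of_bisets Y W T by unfold_locales (rule gob_T)
  show ?thesis
    unfolding left_fibrant_def
  proof (intro conjI ballI impI)
    show "is_gob Y W T" by (rule gob_T)
    show "simplicial_mor T W (brho T)"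
      by (rule simplicial_T[OF left_fibrantD(2)[OF lf_B] left_fibrantD(2)[OF lf_C]])
  next
    fix v f assume v: "v \<in> gverts T" and f: "f \<in> gedges W" and f_src: "gsrc W f = brho T v"
    obtain b c where v_eq: "v = (b, c)" by fastforce
    have f': "f \<in> gcar W" using f by (simp add: gedges_iff)
    show "bij_betw (fib_map T v) (fib_dom Y T v f) (bset T v)"
      unfolding bij_betw_def v_eq
      using fib_map_T_inj[OF lf_B lf_C _ f'] fib_map_T_surj[OF lf_B lf_C _ f'] v f_src
        T.fib_map_equivariant(1)
      unfolding v_eq by auto
    show "fib_map T v (fib_lact Y T v g d) = blact T v g (fib_map T v d)"
      if "g \<in> carrier (grp Y (blam T v))" "d \<in> fib_dom Y T v f" for g d
      using T.fib_map_equivariant(2)[OF v] that by blast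
    show "fib_map T v (fib_ract Y T v d k) = bract T v (fib_map T v d) (ghs W f k)"
      if "k \<in> carrier (grp W f)" "d \<in> fib_dom Y T v f" for k d
      using T.fib_map_equivariant(3)[OF v] that by blast
  qed
qed

lemma left_free_iff:
  "left_free Y X B \<longleftrightarrow> left_fibrant Y X B \<and> (\<forall>z\<in>gcar B. left_free_set (grp Y (blam B z)) (bset B z) (blact B z))"
  unfolding left_free_def left_free_set_def by blast

lemma left_principal_iff:
  "left_principal Y X B \<longleftrightarrow> left_fibrant Y X B \<and> graph_iso B X (brho B) \<and>
    (\<forall>z\<in>gcar B. left_principal_set (grp Y (blam B z)) (bset B z) (blact B z))"
  unfolding left_principal_def left_principal_set_def by blast

lemma left_free_tensor_gob:
  assumes free_B: "left_free Y X B" and free_C: "left_free X W C"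
  shows "left_free Y W (tensor_gob X B C)"
proof -
  have lf: "left_fibrant Y X B" "left_fibrant X W C" using free_B free_C by (simp_all add: left_free_iff)
  interpret composable_gobs Y X W B C using left_fibrant_composable[OF lf] .
  have "left_free_set (grp Y (blam T z)) (bset T z) (blact T z)" if z: "z \<in> gcar T" for z
  proof -
    obtain b c where z_eq: "z = (b, c)" and b: "b \<in> gcar B" and c: "c \<in> gcar C" and bc: "blam C c = brho B b"
      using z by (auto simp: gcar_tensor_gob)
    show ?thesis
      using biset_tensor.tens_left_free[OF biset_tensor_at] z free_B free_C b c bc
      unfolding z_eq left_free_iff by auto
  qed
  then show ?thesis unfolding left_free_iff using left_fibrant_tensor_gob[OF lf] by blast
qed

lemma left_principal_tensor_gob:
  assumes pr_B: "left_principal Y X B" and pr_C: "left_principal X W C"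
  shows "left_principal Y W (tensor_gob X B C)"
proof -
  have lf: "left_fibrant Y X B" "left_fibrant X W C" using pr_B pr_C by (simp_all add: left_principal_iff)
  interpret composable_gobs Y X W B C using left_fibrant_composable[OF lf] .
  have "left_principal_set (grp Y (blam T z)) (bset T z) (blact T z)" if z: "z \<in> gcar T" for z
  proof -
    obtain b c where z_eq: "z = (b, c)" and b: "b \<in> gcar B" and c: "c \<in> gcar C" and bc: "blam C c = brho B b"
      using z by (auto simp: gcar_tensor_gob)
    show ?thesis
      using biset_tensor.tens_left_principal[OF biset_tensor_at] z pr_B pr_C b c bc
      unfolding z_eq left_principal_iff by auto
  qed
  moreover have "graph_iso T W (brho T)"
    using graph_iso_T pr_B pr_C by (simp add: left_principal_iff)
  ultimately show ?thesis unfolding left_principal_iff using left_fibrant_tensor_gob[OF lf] by blast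
qed

theorem mainTheorem13:
  fixes Y :: "('y, 'g, 'z1) gog_scheme" and X :: "('x, 'h, 'z2) gog_scheme"
    and W :: "('w, 'k, 'z3) gog_scheme"
    and B :: "('b, 'y, 'x, 'g, 'h, 'e, 'z4) gob_scheme"
    and C :: "('c, 'x, 'w, 'h, 'k, 'f, 'z5) gob_scheme"
  shows "(left_fibrant Y X B \<and> left_fibrant X W C \<longrightarrow> left_fibrant Y W (tensor_gob X B C)) \<and>
         (left_free Y X B \<and> left_free X W C \<longrightarrow> left_free Y W (tensor_gob X B C)) \<and>
         (left_principal Y X B \<and> left_principal X W C \<longrightarrow> left_principal Y W (tensor_gob X B C))"
  using left_fibrant_tensor_gob left_free_tensor_gob left_principal_tensor_gob by blast

end
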